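(* Let $\omega$ be a T-obstacle. Then every cross of $\omega$ is a minimum skeleton for $\omega$.
   Context: An obstacle $\omega$ is a simple polygon in $\mathbb{R}^2$ (a closed, bounded polygonal region without holes whose boundary does not intersect itself), assumed in general position (no three of its vertices are collinear); vertices and edges of $\omega$ are those of its boundary. $\omega$ is rectilinear if each edge is horizontal or vertical, and a rectilinear obstacle is rectilinearly-convex if any two points of $\omega$ can be joined by a shortest rectilinear path (made of horizontal and vertical segments, of minimum $\ell_1$ length) contained in $\omega$. A corner point of a rectilinear path is a point where a horizontal and a vertical segment of the path meet. A set $S$ of closed line segments is inside $\omega$ if the union of its elements is contained in $\omega$. Such an $S$ is a skeleton for $\omega$ if for every pair of points $p,q$ not in the interior of $\omega$ such that every shortest rectilinear path between $p$ and $q$ with at most one corner point meets the interior of $\omega$, each such path intersects some element of $S$; a minimum skeleton is one with the fewest segments. $B(\omega)$ is the smallest closed axis-parallel rectangle containing $\omega$; the extreme edges are the edges of $\omega$ lying on the boundary of $B(\omega)$ (exactly four: left, right, bottom, top); an extreme corner is a vertex of $\omega$ that is a common endpoint of two extreme edges. A T-obstacle is a rectilinearly-convex obstacle with exactly two extreme corners, which are adjacent (lie on a common side of $B(\omega)$). A cross of $\omega$ is a pair $\{s_H,s_V\}$ of line segments contained in $\omega$, where $s_H$ has one endpoint on each of the two horizontal extreme edges and $s_V$ has one endpoint on each of the two vertical extreme edges. *)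

theory Defs
  imports "HOL-Analysis.Analysis"
begin

type_synonym pt = "real \<times> real"

text \<open>A polygon is given by its cyclic list of vertices; edge i joins vertex i to vertex i+1 (mod n).\<close>

definition nxt :: "pt list \<Rightarrow> nat \<Rightarrow> pt" where
  "nxt vs i = vs ! (Suc i mod length vs)"

definition edge_seg :: "pt list \<Rightarrow> nat \<Rightarrow> pt set" where
  "edge_seg vs i = closed_segment (vs ! i) (nxt vs i)"

definition polygon_boundary :: "pt list \<Rightarrow> pt set" where
  "polygon_boundary vs = (\<Union>i<length vs. edge_seg vs i)"

definition simple_polygon :: "pt list \<Rightarrow> bool" where
  "simple_polygon vs \<longleftrightarrow>
     length vs \<ge> 3 \<and> distinct vs \<and>
     (\<forall>a\<in>set vs. \<forall>b\<in>set vs. \<forall>c\<in>set vs.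
        a \<noteq> b \<and> a \<noteq> c \<and> b \<noteq> c \<longrightarrow> \<not> collinear {a, b, c}) \<and>
     (\<forall>i<length vs. \<forall>j<length vs. i \<noteq> j \<longrightarrow>
        edge_seg vs i \<inter> edge_seg vs j =
          (if Suc i mod length vs = j then {vs ! j}
           else if Suc j mod length vs = i then {vs ! i} else {}))"

text \<open>The obstacle: the closed region bounded by the polygon (boundary plus bounded complementary component).\<close>
definition region :: "pt list \<Rightarrow> pt set" where
  "region vs = polygon_boundary vs \<union> inside (polygon_boundary vs)"

definition edges :: "pt list \<Rightarrow> (pt \<times> pt) set" where
  "edges vs = {(vs ! i, nxt vs i) | i. i < length vs}"

definition rectilinear :: "pt list \<Rightarrow> bool" where
  "rectilinear vs \<longleftrightarrow> (\<forall>(a, b) \<in> edges vs. fst a = fst b \<or> snd a = snd b)"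

definition rect_path :: "pt list \<Rightarrow> bool" where
  "rect_path ps \<longleftrightarrow> ps \<noteq> [] \<and>
     (\<forall>i. Suc i < length ps \<longrightarrow> fst (ps ! i) = fst (ps ! Suc i) \<or> snd (ps ! i) = snd (ps ! Suc i))"

definition path_set :: "pt list \<Rightarrow> pt set" where
  "path_set ps = set ps \<union> (\<Union>i\<in>{i. Suc i < length ps}. closed_segment (ps ! i) (ps ! Suc i))"

definition l1 :: "pt \<Rightarrow> pt \<Rightarrow> real" where
  "l1 a b = \<bar>fst a - fst b\<bar> + \<bar>snd a - snd b\<bar>"

definition path_len :: "pt list \<Rightarrow> real" where
  "path_len ps = (\<Sum>i\<in>{i. Suc i < length ps}. l1 (ps ! i) (ps ! Suc i))"

definition rect_path_between :: "pt \<Rightarrow> pt \<Rightarrow> pt list \<Rightarrow> bool" where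
  "rect_path_between p q ps \<longleftrightarrow> rect_path ps \<and> hd ps = p \<and> last ps = q"

definition shortest_rect_path :: "pt \<Rightarrow> pt \<Rightarrow> pt list \<Rightarrow> bool" where
  "shortest_rect_path p q ps \<longleftrightarrow> rect_path_between p q ps \<and>
     (\<forall>ps'. rect_path_between p q ps' \<longrightarrow> path_len ps \<le> path_len ps')"

definition rect_convex :: "pt set \<Rightarrow> bool" where
  "rect_convex \<omega> \<longleftrightarrow> (\<forall>p\<in>\<omega>. \<forall>q\<in>\<omega>. \<exists>ps. shortest_rect_path p q ps \<and> path_set ps \<subseteq> \<omega>)"

text \<open>Images of the shortest rectilinear paths from p to q with at most one corner point:
  the two L-shaped paths (they coincide with the segment pq when p, q are axis-aligned).\<close>
definition L_paths :: "pt \<Rightarrow> pt \<Rightarrow> pt set set" where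
  "L_paths p q =
     {closed_segment p (fst q, snd p) \<union> closed_segment (fst q, snd p) q,
      closed_segment p (fst p, snd q) \<union> closed_segment (fst p, snd q) q}"

definition is_segment :: "pt set \<Rightarrow> bool" where
  "is_segment s \<longleftrightarrow> (\<exists>a b. a \<noteq> b \<and> s = closed_segment a b)"

definition skeleton :: "pt set \<Rightarrow> pt set set \<Rightarrow> bool" where
  "skeleton \<omega> S \<longleftrightarrow>
     (\<forall>s\<in>S. is_segment s) \<and> \<Union>S \<subseteq> \<omega> \<and>
     (\<forall>p q. p \<notin> interior \<omega> \<and> q \<notin> interior \<omega> \<and>
            (\<forall>P\<in>L_paths p q. P \<inter> interior \<omega> \<noteq> {}) \<longrightarrow>
            (\<forall>P\<in>L_paths p q. \<exists>s\<in>S. P \<inter> s \<noteq> {}))"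

definition minimum_skeleton :: "pt set \<Rightarrow> pt set set \<Rightarrow> bool" where
  "minimum_skeleton \<omega> S \<longleftrightarrow> skeleton \<omega> S \<and> finite S \<and>
     (\<forall>S'. skeleton \<omega> S' \<and> finite S' \<longrightarrow> card S \<le> card S')"

definition xmin :: "pt set \<Rightarrow> real" where "xmin \<omega> = Inf (fst ` \<omega>)"
definition xmax :: "pt set \<Rightarrow> real" where "xmax \<omega> = Sup (fst ` \<omega>)"
definition ymin :: "pt set \<Rightarrow> real" where "ymin \<omega> = Inf (snd ` \<omega>)"
definition ymax :: "pt set \<Rightarrow> real" where "ymax \<omega> = Sup (snd ` \<omega>)"

definition bbox :: "pt set \<Rightarrow> pt set" where
  "bbox \<omega> = {z. xmin \<omega> \<le> fst z \<and> fst z \<le> xmax \<omega> \<and> ymin \<omega> \<le> snd z \<and> snd z \<le> ymax \<omega>}"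

definition extreme_edges :: "pt list \<Rightarrow> (pt \<times> pt) set" where
  "extreme_edges vs = {(a, b) \<in> edges vs. closed_segment a b \<subseteq> frontier (bbox (region vs))}"

definition horizontal_extreme_edges :: "pt list \<Rightarrow> (pt \<times> pt) set" where
  "horizontal_extreme_edges vs = {(a, b) \<in> extreme_edges vs. snd a = snd b}"

definition vertical_extreme_edges :: "pt list \<Rightarrow> (pt \<times> pt) set" where
  "vertical_extreme_edges vs = {(a, b) \<in> extreme_edges vs. fst a = fst b}"

definition extreme_corners :: "pt list \<Rightarrow> pt set" where
  "extreme_corners vs = {v \<in> set vs. \<exists>e1 \<in> extreme_edges vs. \<exists>e2 \<in> extreme_edges vs.
      e1 \<noteq> e2 \<and> v \<in> {fst e1, snd e1} \<and> v \<in> {fst e2, snd e2}}"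

definition on_common_side :: "pt set \<Rightarrow> pt \<Rightarrow> pt \<Rightarrow> bool" where
  "on_common_side \<omega> u v \<longleftrightarrow> u \<in> bbox \<omega> \<and> v \<in> bbox \<omega> \<and>
     ((fst u = xmin \<omega> \<and> fst v = xmin \<omega>) \<or> (fst u = xmax \<omega> \<and> fst v = xmax \<omega>) \<or>
      (snd u = ymin \<omega> \<and> snd v = ymin \<omega>) \<or> (snd u = ymax \<omega> \<and> snd v = ymax \<omega>))"

definition T_obstacle :: "pt list \<Rightarrow> bool" where
  "T_obstacle vs \<longleftrightarrow> simple_polygon vs \<and> rectilinear vs \<and> rect_convex (region vs) \<and>
     card (extreme_corners vs) = 2 \<and>
     (\<forall>u\<in>extreme_corners vs. \<forall>v\<in>extreme_corners vs. on_common_side (region vs) u v)"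

definition is_cross :: "pt list \<Rightarrow> pt set \<Rightarrow> pt set \<Rightarrow> bool" where
  "is_cross vs sH sV \<longleftrightarrow>
     sH \<subseteq> region vs \<and> sV \<subseteq> region vs \<and>
     (\<exists>a b e1 e2. sH = closed_segment a b \<and> e1 \<in> horizontal_extreme_edges vs \<and>
        e2 \<in> horizontal_extreme_edges vs \<and> e1 \<noteq> e2 \<and>
        a \<in> closed_segment (fst e1) (snd e1) \<and> b \<in> closed_segment (fst e2) (snd e2)) \<and>
     (\<exists>c d e1 e2. sV = closed_segment c d \<and> e1 \<in> vertical_extreme_edges vs \<and>
        e2 \<in> vertical_extreme_edges vs \<and> e1 \<noteq> e2 \<and>
        c \<in> closed_segment (fst e1) (snd e1) \<and> d \<in> closed_segment (fst e2) (snd e2))"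

end

theory Submission
  imports Defs
begin

text \<open>
  Up to reflections of the plane, which preserve skeletons, the two extreme corners of a
  T-obstacle \<omega> are the bottom corners of its bounding box \<open>[x0, x1] \<times> [y0, y1]\<close>, so the
  whole bottom side of the box lies in \<omega>; moreover \<omega> is orthogonally convex and meets every
  side of the box in a nondegenerate segment.

  Skeleton: \<open>sH\<close> joins the bottom to the top side and \<open>sV\<close> the left to the right side.
  An axis-parallel chord of \<omega> whose ends lie outside the interior but which passes through an
  interior point must cross \<open>sH\<close> (if horizontal) or \<open>sV\<close> (if vertical): beyond the curve,
  orthogonal convexity would put the end of the chord into the interior. If the corner of an
  L-path is not interior, its two legs are such chords. If it is interior, the interior being
  closed downwards above \<open>y0\<close> forces the other L-path to enter the interior along a leg that
  is such a chord, and an intermediate value argument along \<open>sH\<close> or \<open>sV\<close> finishes.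

  Minimality: a skeleton meets every horizontal line strictly between \<open>y0\<close> and \<open>y1\<close> and every
  vertical line close to \<open>x0\<close> or \<open>x1\<close>. A single segment doing so contains points on the
  top, the left and the right side of the box, and since the top corners are not in \<omega> these
  three points cannot be collinear.
\<close>

lemma mem_closed_segment_horizontal:
  fixes x y u v t :: real
  shows "(x, y) \<in> closed_segment (u, t) (v, t) \<longleftrightarrow> y = t \<and> x \<in> closed_segment u v"
  by (auto simp: closed_segment_def algebra_simps)

lemma mem_closed_segment_vertical:
  fixes x y u v t :: real
  shows "(x, y) \<in> closed_segment (t, u) (t, v) \<longleftrightarrow> x = t \<and> y \<in> closed_segment u v"
  by (auto simp: closed_segment_def algebra_simps)

lemma closed_segment_coordinates:
  assumes "(z :: pt) \<in> closed_segment u v"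
  shows "fst z \<in> closed_segment (fst u) (fst v)" "snd z \<in> closed_segment (snd u) (snd v)"
  using closed_segment_PairD[of "fst z" "snd z" "fst u" "snd u" "fst v" "snd v"] assms by simp_all

lemma mem_interior_iff_Times:
  "z \<in> interior W \<longleftrightarrow> (\<exists>A B. open A \<and> open B \<and> z \<in> A \<times> B \<and> A \<times> B \<subseteq> W)"
proof
  assume "z \<in> interior W"
  then obtain T where "open T" "z \<in> T" "T \<subseteq> W" by (rule interiorE)
  obtain A B where "open A" "open B" "z \<in> A \<times> B" "A \<times> B \<subseteq> T"
    using \<open>open T\<close> \<open>z \<in> T\<close> by (rule open_prod_elim)
  then show "\<exists>A B. open A \<and> open B \<and> z \<in> A \<times> B \<and> A \<times> B \<subseteq> W"
    using \<open>T \<subseteq> W\<close> by blast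
next
  assume "\<exists>A B. open A \<and> open B \<and> z \<in> A \<times> B \<and> A \<times> B \<subseteq> W"
  then show "z \<in> interior W" by (blast intro: interiorI open_Times)
qed

lemma real_open_segment_open: "open (open_segment (a :: real) b)"
  by (simp add: open_segment_eq_real_ivl)

lemma closed_segment_subset_image_if_continuous:
  fixes f :: "real \<Rightarrow> real"
  assumes "continuous_on (closed_segment a b) f"
  shows "closed_segment (f a) (f b) \<subseteq> f ` closed_segment a b"
proof -
  have "convex (f ` closed_segment a b)"
    using connected_continuous_image[OF assms] is_interval_connected_1 is_interval_convex_1
    by blast
  then show ?thesis by (simp add: closed_segment_subset)
qed

lemma rectangle_subset_interior:
  fixes a b c d :: real
  shows "{a..b} \<times> {c..d} \<subseteq> W \<Longrightarrow> {a<..<b} \<times> {c<..<d} \<subseteq> interior W"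
  using interior_mono[of "{a..b} \<times> {c..d}" W] by (simp add: interior_Times)

lemma closed_contains_interval_ends:
  fixes S :: "real set"
  assumes "closed S" "a < b" "{a<..<b} \<subseteq> S"
  shows "a \<in> S" "b \<in> S"
proof -
  have "{a..b} \<subseteq> S"
    using closure_mono[OF assms(3)] closure_closed[OF assms(1)] assms(2) by simp
  then show "a \<in> S" "b \<in> S" using assms(2) by auto
qed

lemma real_open_segment_near_end:
  fixes a b x z :: real
  assumes x: "x \<in> open_segment a z" and b: "\<bar>b - a\<bar> < \<bar>x - a\<bar> / 2"
  shows "x \<in> open_segment ((a + x) / 2) z" "open_segment ((a + x) / 2) z \<subseteq> closed_segment b z"
proof -
  have b': "a - \<bar>x - a\<bar> / 2 < b" "b < a + \<bar>x - a\<bar> / 2"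
    using b abs_ge_self[of "b - a"] abs_ge_minus_self[of "b - a"] by linarith+
  from x consider "a < x" "x < z" | "z < x" "x < a"
    by (auto simp: open_segment_eq_real_ivl split: if_splits)
  then have "x \<in> open_segment ((a + x) / 2) z \<and> open_segment ((a + x) / 2) z \<subseteq> closed_segment b z"
  proof cases
    case 1
    then have "b < (a + x) / 2" "(a + x) / 2 < x" using b' by (auto simp: field_simps)
    then show ?thesis using 1 by (auto simp: open_segment_eq_real_ivl closed_segment_eq_real_ivl)
  next
    case 2
    then have "(a + x) / 2 < b" "x < (a + x) / 2" using b' by (auto simp: field_simps)
    then show ?thesis using 2 by (auto simp: open_segment_eq_real_ivl closed_segment_eq_real_ivl)
  qed
  then show "x \<in> open_segment ((a + x) / 2) z" "open_segment ((a + x) / 2) z \<subseteq> closed_segment b z"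
    by blast+
qed

lemma real_closed_segment_between:
  fixes p q g h :: real
  assumes "g \<notin> closed_segment p q" "p \<notin> open_segment g q" "h \<in> closed_segment q p"
  shows "q \<in> closed_segment g h"
  using assms by (auto simp: open_segment_eq_real_ivl closed_segment_eq_real_ivl split: if_splits)

lemma real_closed_segment_outside:
  fixes u v x c :: real
  assumes "x \<in> closed_segment u v" "x \<noteq> u" "x \<noteq> v" "c \<notin> closed_segment u v"
  shows "u \<in> open_segment c x \<or> v \<in> open_segment c x"
  using assms by (auto simp: open_segment_eq_real_ivl closed_segment_eq_real_ivl split: if_splits)

section \<open>Orthogonal convexity\<close>

definition ortho_convex :: "pt set \<Rightarrow> bool" where
  "ortho_convex W \<longleftrightarrow>
     (\<forall>p\<in>W. \<forall>q\<in>W. fst p = fst q \<or> snd p = snd q \<longrightarrow> closed_segment p q \<subseteq> W)"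

lemma ortho_convex_row:
  assumes "ortho_convex W" "(u, y) \<in> W" "(v, y) \<in> W" "x \<in> closed_segment u v"
  shows "(x, y) \<in> W"
proof -
  have "closed_segment (u, y) (v, y) \<subseteq> W"
    using assms(1-3) unfolding ortho_convex_def by simp
  then show ?thesis
    using assms(4) mem_closed_segment_horizontal by blast
qed

lemma ortho_convex_column:
  assumes "ortho_convex W" "(x, u) \<in> W" "(x, v) \<in> W" "y \<in> closed_segment u v"
  shows "(x, y) \<in> W"
proof -
  have "closed_segment (x, u) (x, v) \<subseteq> W"
    using assms(1-3) unfolding ortho_convex_def by simp
  then show ?thesis
    using assms(4) mem_closed_segment_vertical by blast
qed

lemma ortho_convex_between_rows:
  assumes "ortho_convex W" "I \<times> {y} \<subseteq> W" "I \<times> {y'} \<subseteq> W"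
  shows "I \<times> closed_segment y y' \<subseteq> W"
  using ortho_convex_column[OF assms(1)] assms(2,3) by blast

lemma ortho_convex_between_columns:
  assumes "ortho_convex W" "{x} \<times> J \<subseteq> W" "{x'} \<times> J \<subseteq> W"
  shows "closed_segment x x' \<times> J \<subseteq> W"
  using ortho_convex_row[OF assms(1)] assms(2,3) by blast

lemma path_len_singleton [simp]: "path_len [a] = 0"
  by (simp add: path_len_def)

lemma path_set_singleton [simp]: "path_set [a] = {a}"
  by (simp add: path_set_def)

lemma path_len_Cons_Cons: "path_len (a # b # ps) = l1 a b + path_len (b # ps)"
proof -
  have "{i. Suc i < length (a # b # ps)} = {..<Suc (length ps)}"
       "{i. Suc i < length (b # ps)} = {..<length ps}" by auto
  then show ?thesis
    unfolding path_len_def by (simp only:) (subst sum.lessThan_Suc_shift, simp)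
qed

lemma path_set_Cons_Cons: "path_set (a # b # ps) = closed_segment a b \<union> path_set (b # ps)"
proof -
  have "{i. Suc i < length (a # b # ps)} = {..<Suc (length ps)}"
       "{i. Suc i < length (b # ps)} = {..<length ps}" by auto
  then show ?thesis unfolding path_set_def by (auto simp: lessThan_Suc_eq_insert_0)
qed

lemma l1_triangle: "l1 a c \<le> l1 a b + l1 b c"
  unfolding l1_def by linarith

lemma path_len_through:
  "z \<in> set ps \<Longrightarrow> l1 (hd ps) z + l1 z (last ps) \<le> path_len ps"
proof (induction ps arbitrary: z rule: induct_list012)
  case (3 a b ps)
  show ?case
  proof (cases "z = a")
    case True
    have "l1 b (last (b # ps)) \<le> path_len (b # ps)"
      using "3.IH"(2)[of b] by (simp add: l1_def)
    then show ?thesis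
      using True l1_triangle[of a "last (b # ps)" b] by (simp add: path_len_Cons_Cons l1_def)
  next
    case False
    then have "z \<in> set (b # ps)" using "3.prems" by simp
    then have "l1 b z + l1 z (last (b # ps)) \<le> path_len (b # ps)"
      using "3.IH"(2) by fastforce
    then show ?thesis
      using l1_triangle[of a z b] by (simp add: path_len_Cons_Cons)
  qed
qed (auto simp: l1_def)

lemma closed_segment_subset_Un_if_collinear:
  fixes a b c :: "'a::euclidean_space"
  assumes "collinear {a, b, c}"
  shows "closed_segment a c \<subseteq> closed_segment a b \<union> closed_segment b c"
proof -
  from assms consider "a \<in> closed_segment b c" | "b \<in> closed_segment a c" | "c \<in> closed_segment a b"
    unfolding collinear_between_cases between_mem_segment by (auto simp: closed_segment_commute)
  then show ?thesis
  proof cases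
    case 1
    then have "closed_segment a c \<subseteq> closed_segment b c" by (simp add: subset_closed_segment)
    then show ?thesis by blast
  next
    case 2
    then show ?thesis by (simp add: Un_closed_segment)
  next
    case 3
    then have "closed_segment a c \<subseteq> closed_segment a b" by (simp add: subset_closed_segment)
    then show ?thesis by blast
  qed
qed

lemma closed_segment_subset_path_set:
  "ps \<noteq> [] \<Longrightarrow> collinear (set ps) \<Longrightarrow> closed_segment (hd ps) (last ps) \<subseteq> path_set ps"
proof (induction ps rule: induct_list012)
  case (3 a b ps)
  have "collinear {a, b, last (b # ps)}"
    using "3.prems"(2) by (rule collinear_subset) auto
  then have "closed_segment a (last (b # ps)) \<subseteq> closed_segment a b \<union> closed_segment b (last (b # ps))"
    by (rule closed_segment_subset_Un_if_collinear)
  moreover have "collinear (set (b # ps))"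
    using "3.prems"(2) by (rule collinear_subset) auto
  then have "closed_segment b (last (b # ps)) \<subseteq> path_set (b # ps)"
    using "3.IH"(2) by simp
  ultimately show ?case by (auto simp: path_set_Cons_Cons)
qed auto

lemma mem_closed_segment_if_l1_eq:
  assumes "fst p = fst q \<or> snd p = snd q" and "l1 p z + l1 z q \<le> l1 p q"
  shows "z \<in> closed_segment p q"
proof -
  obtain px py qx qy zx zy where pqz: "p = (px, py)" "q = (qx, qy)" "z = (zx, zy)"
    by (metis prod.exhaust)
  from assms show ?thesis
    unfolding pqz l1_def
    by (auto simp: mem_closed_segment_horizontal mem_closed_segment_vertical
        closed_segment_eq_real_ivl)
qed

lemma rect_convex_imp_ortho_convex:
  assumes "rect_convex W"
  shows "ortho_convex W"
  unfolding ortho_convex_def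
proof (intro ballI impI)
  fix p q assume pq: "p \<in> W" "q \<in> W" "fst p = fst q \<or> snd p = snd q"
  obtain ps where ps: "shortest_rect_path p q ps" "path_set ps \<subseteq> W"
    using assms pq(1,2) unfolding rect_convex_def by blast
  have ends: "ps \<noteq> []" "hd ps = p" "last ps = q"
    using ps(1) unfolding shortest_rect_path_def rect_path_between_def rect_path_def by auto
  have "rect_path_between p q [p, q]"
    using pq(3) unfolding rect_path_between_def rect_path_def by (auto simp: less_Suc_eq)
  then have "path_len ps \<le> l1 p q"
    using ps(1) unfolding shortest_rect_path_def by (force simp: path_len_Cons_Cons)
  then have "set ps \<subseteq> closed_segment p q"
    using path_len_through[of _ ps] ends pq(3) by (force intro: mem_closed_segment_if_l1_eq)
  then have "collinear (set ps)"
    by (rule collinear_subset[OF collinear_closed_segment])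
  then show "closed_segment p q \<subseteq> W"
    using closed_segment_subset_path_set[of ps] ends ps(2) by auto
qed

section \<open>Skeletons and the symmetries of the grid\<close>

definition L_path :: "pt \<Rightarrow> pt \<Rightarrow> pt set" where
  "L_path p q = closed_segment p (fst q, snd p) \<union> closed_segment (fst q, snd p) q"

lemma mem_L_path:
  "(x, y) \<in> L_path (px, py) (qx, qy) \<longleftrightarrow>
     y = py \<and> x \<in> closed_segment px qx \<or> x = qx \<and> y \<in> closed_segment py qy"
  by (auto simp: L_path_def mem_closed_segment_horizontal mem_closed_segment_vertical)

lemma L_paths_eq: "L_paths p q = {L_path p q, L_path q p}"
  unfolding L_paths_def L_path_def by (simp add: closed_segment_commute Un_commute)

lemma L_paths_aligned:
  assumes "fst p = fst q \<or> snd p = snd q"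
  shows "L_paths p q = {closed_segment p q}"
proof -
  have "(fst q, snd p) = p \<and> (fst p, snd q) = q \<or> (fst q, snd p) = q \<and> (fst p, snd q) = p"
    using assms by (auto simp: prod_eq_iff)
  then show ?thesis
    unfolding L_paths_def by (auto simp: closed_segment_commute insert_absorb)
qed

definition grid_symmetry :: "(pt \<Rightarrow> pt) \<Rightarrow> bool" where
  "grid_symmetry f \<longleftrightarrow> linear f \<and> (\<forall>z. f (f z) = z) \<and>
     (\<forall>p q. fst (f p) = fst (f q) \<or> snd (f p) = snd (f q) \<longleftrightarrow> fst p = fst q \<or> snd p = snd q) \<and>
     (\<forall>p q. L_paths (f p) (f q) = (`) f ` L_paths p q)"

lemma grid_symmetry_swap: "grid_symmetry prod.swap"
proof -
  have "linear (prod.swap :: pt \<Rightarrow> pt)" by (rule linearI) auto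
  moreover have "L_paths (prod.swap p) (prod.swap q) = (`) prod.swap ` L_paths p q" for p q :: pt
    unfolding L_paths_def
    by (simp add: closed_segment_linear_image[OF \<open>linear prod.swap\<close>, symmetric] image_Un
        closed_segment_commute Un_commute insert_commute)
  ultimately show ?thesis unfolding grid_symmetry_def by auto
qed

lemma grid_symmetry_reflect: "grid_symmetry (apsnd uminus)"
proof -
  have "linear (apsnd uminus :: pt \<Rightarrow> pt)" by (rule linearI) auto
  moreover have "L_paths (apsnd uminus p) (apsnd uminus q) = (`) (apsnd uminus) ` L_paths p q"
    for p q :: pt
    unfolding L_paths_def
    by (simp add: closed_segment_linear_image[OF \<open>linear (apsnd uminus)\<close>, symmetric] image_Un)
  ultimately show ?thesis unfolding grid_symmetry_def by auto
qed

lemma involution_image_iff: "(\<And>z. f (f z) = z) \<Longrightarrow> z \<in> f ` A \<longleftrightarrow> f z \<in> A"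
  by (metis image_eqI imageE)

lemma involution_image_image: "(\<And>z. f (f z) = z) \<Longrightarrow> f ` f ` A = A"
  by (simp add: image_image)

context
  fixes f :: "pt \<Rightarrow> pt"
  assumes f: "grid_symmetry f"
begin

lemma grid_symmetry_involution: "f (f z) = z"
  using f unfolding grid_symmetry_def by blast

lemma grid_symmetry_inj: "inj f"
  by (rule injI) (metis grid_symmetry_involution)

lemma grid_symmetry_segment: "f ` closed_segment u v = closed_segment (f u) (f v)"
  using f unfolding grid_symmetry_def by (simp add: closed_segment_linear_image)

lemma grid_symmetry_interior: "interior (f ` W) = f ` interior W"
  using f grid_symmetry_inj unfolding grid_symmetry_def
  by (simp add: interior_injective_linear_image)

lemma ortho_convex_grid_symmetry_image:
  assumes "ortho_convex W"
  shows "ortho_convex (f ` W)"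
  unfolding ortho_convex_def
proof (intro ballI impI)
  fix p' q' assume "p' \<in> f ` W" "q' \<in> f ` W" and aligned: "fst p' = fst q' \<or> snd p' = snd q'"
  then obtain p q where pq: "p \<in> W" "q \<in> W" "p' = f p" "q' = f q" by blast
  then have "fst p = fst q \<or> snd p = snd q"
    using f aligned unfolding grid_symmetry_def by blast
  then have "closed_segment p q \<subseteq> W" using assms pq(1,2) unfolding ortho_convex_def by blast
  then have "f ` closed_segment p q \<subseteq> f ` W" by (rule image_mono)
  then show "closed_segment p' q' \<subseteq> f ` W"
    using pq(3,4) grid_symmetry_segment by simp
qed

lemma skeleton_grid_symmetry_image:
  assumes sk: "skeleton (f ` W) S"
  shows "skeleton W ((`) f ` S)"
  unfolding skeleton_def
proof (intro conjI allI impI ballI)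
  fix s' assume "s' \<in> (`) f ` S"
  then obtain s where "s \<in> S" "s' = f ` s" by blast
  moreover have "is_segment s" using sk \<open>s \<in> S\<close> unfolding skeleton_def by blast
  then obtain u v where "u \<noteq> v" "s = closed_segment u v" unfolding is_segment_def by blast
  ultimately have "s' = closed_segment (f u) (f v)" by (simp add: grid_symmetry_segment)
  moreover have "f u \<noteq> f v" using \<open>u \<noteq> v\<close> grid_symmetry_inj by (simp add: inj_eq)
  ultimately show "is_segment s'"
    unfolding is_segment_def by blast
next
  have "\<Union>S \<subseteq> f ` W" using sk unfolding skeleton_def by blast
  then have "\<Union> ((`) f ` S) \<subseteq> f ` f ` W" by auto
  then show "\<Union> ((`) f ` S) \<subseteq> W"
    using involution_image_image[of f W] grid_symmetry_involution by simp
next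
  fix p q P
  assume pq: "p \<notin> interior W \<and> q \<notin> interior W \<and> (\<forall>P\<in>L_paths p q. P \<inter> interior W \<noteq> {})"
    and P: "P \<in> L_paths p q"
  have L: "L_paths (f p) (f q) = (`) f ` L_paths p q"
    using f unfolding grid_symmetry_def by blast
  have "f p \<notin> interior (f ` W)" "f q \<notin> interior (f ` W)"
    using pq grid_symmetry_inj by (simp_all add: grid_symmetry_interior inj_image_mem_iff)
  moreover have "P' \<inter> interior (f ` W) \<noteq> {}" if P': "P' \<in> L_paths (f p) (f q)" for P'
  proof -
    obtain Q where "Q \<in> L_paths p q" "P' = f ` Q" using P' unfolding L by blast
    then obtain w where "w \<in> Q" "w \<in> interior W" using pq by blast
    then show ?thesis unfolding \<open>P' = f ` Q\<close> grid_symmetry_interior by blast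
  qed
  ultimately have "\<forall>P'\<in>L_paths (f p) (f q). \<exists>s\<in>S. P' \<inter> s \<noteq> {}"
    using sk unfolding skeleton_def by blast
  moreover have "f ` P \<in> L_paths (f p) (f q)" using P unfolding L by blast
  ultimately obtain s w where "s \<in> S" "w \<in> P" "f w \<in> s" by blast
  then have "w \<in> P \<inter> f ` s"
    using grid_symmetry_involution[of w] by (metis IntI image_eqI)
  then show "\<exists>s'\<in>(`) f ` S. P \<inter> s' \<noteq> {}" using \<open>s \<in> S\<close> by blast
qed

lemma minimum_skeleton_grid_symmetry_image:
  assumes ms: "minimum_skeleton (f ` W) S"
  shows "minimum_skeleton W ((`) f ` S)"
proof -
  have inj_image: "inj ((`) f)"
    using grid_symmetry_inj by (simp add: inj_image_eq_iff inj_on_def)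
  have "card ((`) f ` S) \<le> card S'" if "skeleton W S'" "finite S'" for S'
  proof -
    have "skeleton (f ` W) ((`) f ` S')"
      using skeleton_grid_symmetry_image[of "f ` W" S'] that(1)
        involution_image_image[of f W] grid_symmetry_involution by simp
    then have "card S \<le> card ((`) f ` S')"
      using ms that(2) unfolding minimum_skeleton_def by blast
    also have "\<dots> \<le> card S'" using that(2) by (rule card_image_le)
    finally show ?thesis using inj_image by (simp add: card_image inj_on_subset)
  qed
  then show ?thesis
    using ms skeleton_grid_symmetry_image unfolding minimum_skeleton_def by blast
qed

end

lemma mem_swap_image: "(x, y) \<in> prod.swap ` W \<longleftrightarrow> (y, x) \<in> W"
  by (simp add: involution_image_iff[where f = prod.swap])

lemma mem_reflect_image: "(x, y) \<in> apsnd uminus ` W \<longleftrightarrow> (x, - y) \<in> (W :: pt set)"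
  using involution_image_iff[where f = "apsnd uminus", OF grid_symmetry_involution[OF grid_symmetry_reflect]]
  by simp

lemma ortho_convex_swap: "ortho_convex W \<Longrightarrow> ortho_convex (prod.swap ` W)"
  by (rule ortho_convex_grid_symmetry_image[OF grid_symmetry_swap])

lemma mem_interior_swap:
  fixes W :: "pt set"
  shows "(x, y) \<in> interior (prod.swap ` W) \<longleftrightarrow> (y, x) \<in> interior W"
  using grid_symmetry_interior[OF grid_symmetry_swap, of W] by (simp add: mem_swap_image)

lemma skeleton_meets_aligned_chord:
  assumes "skeleton W S" "p \<notin> interior W" "q \<notin> interior W" "fst p = fst q \<or> snd p = snd q"
    and "z \<in> closed_segment p q" "z \<in> interior W"
  shows "\<exists>s\<in>S. closed_segment p q \<inter> s \<noteq> {}"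
proof -
  have "\<forall>P\<in>L_paths p q. P \<inter> interior W \<noteq> {}"
    using assms(4-6) L_paths_aligned by blast
  then have "\<forall>P\<in>L_paths p q. \<exists>s\<in>S. P \<inter> s \<noteq> {}"
    using assms(1-3) unfolding skeleton_def by blast
  then show ?thesis
    using L_paths_aligned[OF assms(4)] by (simp add: Int_commute)
qed

section \<open>Axis-parallel chords crossing a curve\<close>

text \<open>Near height \<open>t\<close> the curve stays on its side of \<open>x\<close>, so orthogonal convexity fills an
  open box around \<open>(x, t)\<close> between the curve and an interior neighbourhood of \<open>(z, t)\<close>.\<close>

lemma ortho_convex_interior_beside_curve:
  fixes g :: "real \<Rightarrow> real"
  assumes W: "ortho_convex W" and g: "isCont g t" and curve: "\<forall>\<^sub>F y in nhds t. (g y, y) \<in> W"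
    and z: "(z, t) \<in> interior W" and x: "x \<in> open_segment (g t) z"
  shows "(x, t) \<in> interior W"
proof -
  obtain B where AB: "open B" "t \<in> B" "{z} \<times> B \<subseteq> W"
    using z unfolding mem_interior_iff_Times by blast
  define d where "d = \<bar>x - g t\<bar> / 2"
  define m where "m = (g t + x) / 2"
  have "d > 0" using x unfolding d_def by (auto simp: open_segment_eq_real_ivl split: if_splits)
  with g have "\<forall>\<^sub>F y in nhds t. dist (g y) (g t) < d"
    unfolding isCont_def tendsto_at_iff_tendsto_nhds by (rule tendstoD)
  with curve have "\<forall>\<^sub>F y in nhds t. (g y, y) \<in> W \<and> dist (g y) (g t) < d"
    by (rule eventually_conj)
  then obtain B' where B': "open B'" "t \<in> B'"
    "\<And>y. y \<in> B' \<Longrightarrow> (g y, y) \<in> W \<and> \<bar>g y - g t\<bar> < d"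
    unfolding eventually_nhds dist_real_def by blast
  have "open_segment m z \<times> (B \<inter> B') \<subseteq> W"
  proof clarify
    fix x' y assume x': "x' \<in> open_segment m z" and y: "y \<in> B" "y \<in> B'"
    have "x' \<in> closed_segment (g y) z"
      using real_open_segment_near_end(2)[OF x] B'(3)[OF y(2)] x' unfolding m_def d_def by blast
    moreover have "(g y, y) \<in> W" "(z, y) \<in> W" using B'(3)[OF y(2)] AB(3) y(1) by auto
    ultimately show "(x', y) \<in> W"
      using ortho_convex_row[OF W] by blast
  qed
  moreover have "x \<in> open_segment m z"
    using real_open_segment_near_end(1)[OF x, of "g t"] \<open>d > 0\<close> unfolding m_def d_def by simp
  moreover have "open (open_segment m z)" "open (B \<inter> B')"
    using real_open_segment_open AB(1) B'(1) by auto
  ultimately show ?thesis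
    unfolding mem_interior_iff_Times using AB(2) B'(2) by blast
qed

lemma ortho_convex_row_chord_crosses_curve:
  fixes g :: "real \<Rightarrow> real"
  assumes "ortho_convex W" "isCont g t" "\<forall>\<^sub>F y in nhds t. (g y, y) \<in> W"
    and u: "(u, t) \<notin> interior W" and v: "(v, t) \<notin> interior W"
    and x: "x \<in> closed_segment u v" "(x, t) \<in> interior W"
  shows "g t \<in> closed_segment u v"
proof (rule ccontr)
  assume "g t \<notin> closed_segment u v"
  moreover have "x \<noteq> u" "x \<noteq> v" using u v x(2) by auto
  ultimately have "u \<in> open_segment (g t) x \<or> v \<in> open_segment (g t) x"
    using x(1) real_closed_segment_outside by blast
  then show False
    using ortho_convex_interior_beside_curve[OF assms(1-3) x(2)] u v by blast
qed

lemma ortho_convex_column_chord_crosses_curve: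
  fixes h :: "real \<Rightarrow> real"
  assumes W: "ortho_convex W" and h: "isCont h s" and curve: "\<forall>\<^sub>F x in nhds s. (x, h x) \<in> W"
    and "(s, u) \<notin> interior W" "(s, v) \<notin> interior W"
    and "y \<in> closed_segment u v" "(s, y) \<in> interior W"
  shows "h s \<in> closed_segment u v"
proof (rule ortho_convex_row_chord_crosses_curve[OF ortho_convex_swap[OF W] h])
  show "\<forall>\<^sub>F x in nhds s. (h x, x) \<in> prod.swap ` W"
    using curve by (simp add: mem_swap_image)
qed (use assms in \<open>simp_all add: mem_interior_swap\<close>)

section \<open>The cross of a T-shaped configuration\<close>

lemma closed_projections_segment:
  assumes "is_segment s"
  shows "closed (fst ` s)" "closed (snd ` s)"
proof -
  obtain A B where "s = closed_segment A B" using assms unfolding is_segment_def by blast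
  then have "compact s" by simp
  moreover have "continuous_on s (\<lambda>z. fst z)" "continuous_on s (\<lambda>z. snd z)"
    by (intro continuous_intros)+
  ultimately show "closed (fst ` s)" "closed (snd ` s)"
    by (simp_all add: compact_imp_closed compact_continuous_image)
qed

lemma two_aligned_corners_cases:
  fixes x0 x1 y0 y1 :: real and W :: "(real \<times> real) set"
  assumes "x0 < x1" "y0 < y1" and corners: "W \<inter> ({x0, x1} \<times> {y0, y1}) = {p, q}"
    and "p \<noteq> q" "fst p = fst q \<or> snd p = snd q"
  shows "(x0, y0) \<in> W \<and> (x1, y0) \<in> W \<and> (x0, y1) \<notin> W \<and> (x1, y1) \<notin> W \<or>
    (x0, y1) \<in> W \<and> (x1, y1) \<in> W \<and> (x0, y0) \<notin> W \<and> (x1, y0) \<notin> W \<or>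
    (x0, y0) \<in> W \<and> (x0, y1) \<in> W \<and> (x1, y0) \<notin> W \<and> (x1, y1) \<notin> W \<or>
    (x1, y0) \<in> W \<and> (x1, y1) \<in> W \<and> (x0, y0) \<notin> W \<and> (x0, y1) \<notin> W"
proof -
  obtain px py qx qy where pq: "p = (px, py)" "q = (qx, qy)" by (metis prod.exhaust)
  have "{p, q} \<subseteq> {x0, x1} \<times> {y0, y1}"
    using inf_le2[of W "{x0, x1} \<times> {y0, y1}"] unfolding corners .
  then have K: "px = x0 \<or> px = x1" "py = y0 \<or> py = y1" "qx = x0 \<or> qx = x1" "qy = y0 \<or> qy = y1"
    unfolding pq by auto
  have "(x, y) \<in> W \<longleftrightarrow> (x = px \<and> y = py) \<or> (x = qx \<and> y = qy)"
    if "x = x0 \<or> x = x1" "y = y0 \<or> y = y1" for x y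
  proof -
    have "(x, y) \<in> W \<inter> ({x0, x1} \<times> {y0, y1}) \<longleftrightarrow> (x, y) \<in> {p, q}" by (simp only: corners)
    then show ?thesis using that unfolding pq by auto
  qed
  then have mem: "(x0, y0) \<in> W \<longleftrightarrow> (x0 = px \<and> y0 = py) \<or> (x0 = qx \<and> y0 = qy)"
    "(x0, y1) \<in> W \<longleftrightarrow> (x0 = px \<and> y1 = py) \<or> (x0 = qx \<and> y1 = qy)"
    "(x1, y0) \<in> W \<longleftrightarrow> (x1 = px \<and> y0 = py) \<or> (x1 = qx \<and> y0 = qy)"
    "(x1, y1) \<in> W \<longleftrightarrow> (x1 = px \<and> y1 = py) \<or> (x1 = qx \<and> y1 = qy)"
    by blast+
  have "px \<noteq> qx \<or> py \<noteq> qy" "px = qx \<or> py = qy" using assms(4,5) unfolding pq by auto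
  with K show ?thesis unfolding mem using assms(1,2) by (elim disjE) simp_all
qed

text \<open>\<open>W\<close> plays the role of the obstacle, \<open>[x0, x1] \<times> [y0, y1]\<close> of its bounding box, and
  \<open>sH = closed_segment a b\<close>, \<open>sV = closed_segment c d\<close> of the cross.\<close>

locale cross_config =
  fixes W :: "pt set" and x0 x1 y0 y1 :: real and a b c d :: pt
  assumes box: "W \<subseteq> {x0..x1} \<times> {y0..y1}"
    and ortho_convex: "ortho_convex W"
    and bottom_wide: "\<exists>u v. u < v \<and> (u, y0) \<in> W \<and> (v, y0) \<in> W"
    and top_wide: "\<exists>u v. u < v \<and> (u, y1) \<in> W \<and> (v, y1) \<in> W"
    and left_tall: "\<exists>u v. u < v \<and> (x0, u) \<in> W \<and> (x0, v) \<in> W"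
    and right_tall: "\<exists>u v. u < v \<and> (x1, u) \<in> W \<and> (x1, v) \<in> W"
    and sH: "snd a = y0" "snd b = y1" "closed_segment a b \<subseteq> W"
    and sV: "fst c = x0" "fst d = x1" "closed_segment c d \<subseteq> W"
begin

lemma box_bounds:
  assumes "(x, y) \<in> W"
  shows "x0 \<le> x" "x \<le> x1" "y0 \<le> y" "y \<le> y1"
proof -
  have "(x, y) \<in> {x0..x1} \<times> {y0..y1}" using assms box by blast
  then show "x0 \<le> x" "x \<le> x1" "y0 \<le> y" "y \<le> y1" by auto
qed

lemma x0_less_x1: "x0 < x1"
  using bottom_wide box_bounds by fastforce

lemma y0_less_y1: "y0 < y1"
  using left_tall box_bounds by fastforce

lemma interior_in_open_box:
  assumes "z \<in> interior W"
  shows "x0 < fst z" "fst z < x1" "y0 < snd z" "snd z < y1"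
proof -
  have "interior W \<subseteq> {x0<..<x1} \<times> {y0<..<y1}"
    using interior_mono[OF box] by (simp add: interior_Times)
  then show "x0 < fst z" "fst z < x1" "y0 < snd z" "snd z < y1"
    using assms by auto
qed

definition sH_x :: "real \<Rightarrow> real" where
  "sH_x t = fst a + (t - y0) / (y1 - y0) * (fst b - fst a)"

definition sV_y :: "real \<Rightarrow> real" where
  "sV_y s = snd c + (s - x0) / (x1 - x0) * (snd d - snd c)"

lemma isCont_sH_x: "isCont sH_x t"
  unfolding sH_x_def using y0_less_y1 by (intro continuous_intros) auto

lemma isCont_sV_y: "isCont sV_y s"
  unfolding sV_y_def using x0_less_x1 by (intro continuous_intros) auto

lemma sH_point:
  assumes "y0 \<le> t" "t \<le> y1"
  shows "(sH_x t, t) \<in> closed_segment a b"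
proof -
  define u where "u = (t - y0) / (y1 - y0)"
  have pos: "0 < y1 - y0" using y0_less_y1 by simp
  then have "0 \<le> u" "u \<le> 1" using assms by (auto simp: u_def field_simps)
  moreover have "(sH_x t, t) = (1 - u) *\<^sub>R a + u *\<^sub>R b"
  proof (rule prod_eqI)
    have "sH_x t = fst a + u * (fst b - fst a)" by (simp add: sH_x_def u_def)
    then show "fst (sH_x t, t) = fst ((1 - u) *\<^sub>R a + u *\<^sub>R b)"
      by (simp add: algebra_simps)
    have "u * (y1 - y0) = t - y0" using pos by (simp add: u_def)
    then show "snd (sH_x t, t) = snd ((1 - u) *\<^sub>R a + u *\<^sub>R b)"
      using sH(1,2) by (simp add: algebra_simps)
  qed
  ultimately show ?thesis unfolding closed_segment_def by blast
qed

lemma sV_point: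
  assumes "x0 \<le> s" "s \<le> x1"
  shows "(s, sV_y s) \<in> closed_segment c d"
proof -
  define u where "u = (s - x0) / (x1 - x0)"
  have pos: "0 < x1 - x0" using x0_less_x1 by simp
  then have "0 \<le> u" "u \<le> 1" using assms by (auto simp: u_def field_simps)
  moreover have "(s, sV_y s) = (1 - u) *\<^sub>R c + u *\<^sub>R d"
  proof (rule prod_eqI)
    have "u * (x1 - x0) = s - x0" using pos by (simp add: u_def)
    then show "fst (s, sV_y s) = fst ((1 - u) *\<^sub>R c + u *\<^sub>R d)"
      using sV(1,2) by (simp add: algebra_simps)
    have "sV_y s = snd c + u * (snd d - snd c)" by (simp add: sV_y_def u_def)
    then show "snd (s, sV_y s) = snd ((1 - u) *\<^sub>R c + u *\<^sub>R d)"
      by (simp add: algebra_simps)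
  qed
  ultimately show ?thesis unfolding closed_segment_def by blast
qed

lemma sH_meets_column:
  assumes "x \<in> closed_segment (sH_x t) (sH_x t')" "t \<in> {y0..y1}" "t' \<in> {y0..y1}"
  obtains y where "y \<in> closed_segment t t'" "(x, y) \<in> closed_segment a b"
proof -
  have "continuous_on (closed_segment t t') sH_x"
    by (simp add: continuous_at_imp_continuous_on isCont_sH_x)
  then obtain y where y: "y \<in> closed_segment t t'" "sH_x y = x"
    using assms(1) closed_segment_subset_image_if_continuous by blast
  moreover have "y0 \<le> y" "y \<le> y1"
    using y(1) assms(2,3) by (auto simp: closed_segment_eq_real_ivl split: if_splits)
  ultimately show thesis using that sH_point by metis
qed

lemma sV_meets_row:
  assumes "y \<in> closed_segment (sV_y s) (sV_y s')" "s \<in> {x0..x1}" "s' \<in> {x0..x1}"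
  obtains x where "x \<in> closed_segment s s'" "(x, y) \<in> closed_segment c d"
proof -
  have "continuous_on (closed_segment s s') sV_y"
    by (simp add: continuous_at_imp_continuous_on isCont_sV_y)
  then obtain x where x: "x \<in> closed_segment s s'" "sV_y x = y"
    using assms(1) closed_segment_subset_image_if_continuous by blast
  moreover have "x0 \<le> x" "x \<le> x1"
    using x(1) assms(2,3) by (auto simp: closed_segment_eq_real_ivl split: if_splits)
  ultimately show thesis using that sV_point by metis
qed

lemma sH_near:
  assumes "y0 < t" "t < y1"
  shows "\<forall>\<^sub>F y in nhds t. (sH_x y, y) \<in> W"
proof -
  have "\<forall>\<^sub>F y in nhds t. y \<in> {y0<..<y1}"
    using assms by (intro eventually_nhds_in_open) auto
  then show ?thesis
    by eventually_elim (use sH_point sH(3) in auto)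
qed

lemma sV_near:
  assumes "x0 < s" "s < x1"
  shows "\<forall>\<^sub>F x in nhds s. (x, sV_y x) \<in> W"
proof -
  have "\<forall>\<^sub>F x in nhds s. x \<in> {x0<..<x1}"
    using assms by (intro eventually_nhds_in_open) auto
  then show ?thesis
    by eventually_elim (use sV_point sV(3) in auto)
qed

lemma row_chord_meets_sH:
  assumes "(u, t) \<notin> interior W" "(v, t) \<notin> interior W"
    and "x \<in> closed_segment u v" "(x, t) \<in> interior W"
  shows "sH_x t \<in> closed_segment u v"
  using ortho_convex_row_chord_crosses_curve[OF ortho_convex isCont_sH_x sH_near assms]
    interior_in_open_box[OF assms(4)] by simp

lemma column_chord_meets_sV:
  assumes "(s, u) \<notin> interior W" "(s, v) \<notin> interior W"
    and "y \<in> closed_segment u v" "(s, y) \<in> interior W"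
  shows "sV_y s \<in> closed_segment u v"
  using ortho_convex_column_chord_crosses_curve[OF ortho_convex isCont_sV_y sV_near assms]
    interior_in_open_box[OF assms(4)] by simp

lemma sH_beside_interior:
  assumes "(u, t) \<notin> interior W" "(z, t) \<in> interior W"
  shows "u \<notin> open_segment (sH_x t) z"
  using ortho_convex_interior_beside_curve[OF ortho_convex isCont_sH_x sH_near assms(2)] assms
    interior_in_open_box[OF assms(2)] by auto

lemma skeleton_meets_row:
  assumes "skeleton W S" "(x, t) \<in> interior W"
  shows "\<exists>s\<in>S. t \<in> snd ` s"
proof -
  have "(x0 - 1, t) \<notin> interior W" "(x1 + 1, t) \<notin> interior W"
    using interior_in_open_box(1)[of "(x0 - 1, t)"] interior_in_open_box(2)[of "(x1 + 1, t)"] by auto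
  moreover have "(x, t) \<in> closed_segment (x0 - 1, t) (x1 + 1, t)"
    using interior_in_open_box[OF assms(2)]
    by (simp add: mem_closed_segment_horizontal closed_segment_eq_real_ivl)
  ultimately obtain s z where "s \<in> S" "z \<in> s" "z \<in> closed_segment (x0 - 1, t) (x1 + 1, t)"
    using skeleton_meets_aligned_chord[OF assms(1)] assms(2) by (metis disjoint_iff snd_conv)
  moreover from this have "snd z = t" by (cases z) (simp add: mem_closed_segment_horizontal)
  ultimately show ?thesis by blast
qed

lemma skeleton_meets_column:
  assumes "skeleton W S" "(x, y) \<in> interior W"
  shows "\<exists>s\<in>S. x \<in> fst ` s"
proof -
  have "(x, y0 - 1) \<notin> interior W" "(x, y1 + 1) \<notin> interior W"
    using interior_in_open_box(3)[of "(x, y0 - 1)"] interior_in_open_box(4)[of "(x, y1 + 1)"] by auto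
  moreover have "(x, y) \<in> closed_segment (x, y0 - 1) (x, y1 + 1)"
    using interior_in_open_box[OF assms(2)]
    by (simp add: mem_closed_segment_vertical closed_segment_eq_real_ivl)
  ultimately obtain s z where "s \<in> S" "z \<in> s" "z \<in> closed_segment (x, y0 - 1) (x, y1 + 1)"
    using skeleton_meets_aligned_chord[OF assms(1)] assms(2) by (metis disjoint_iff fst_conv)
  moreover from this have "fst z = x" by (cases z) (simp add: mem_closed_segment_vertical)
  ultimately show ?thesis by blast
qed

lemma cross_config_reflect:
  "cross_config (apsnd uminus ` W) x0 x1 (-y1) (-y0)
     (apsnd uminus b) (apsnd uminus a) (apsnd uminus c) (apsnd uminus d)"
proof
  show "apsnd uminus ` W \<subseteq> {x0..x1} \<times> {- y1..- y0}"
    using box by auto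
  show "ortho_convex (apsnd uminus ` W)"
    by (rule ortho_convex_grid_symmetry_image[OF grid_symmetry_reflect ortho_convex])
  show "\<exists>u v. u < v \<and> (u, - y1) \<in> apsnd uminus ` W \<and> (v, - y1) \<in> apsnd uminus ` W"
    using top_wide by (simp add: mem_reflect_image)
  show "\<exists>u v. u < v \<and> (u, - y0) \<in> apsnd uminus ` W \<and> (v, - y0) \<in> apsnd uminus ` W"
    using bottom_wide by (simp add: mem_reflect_image)
  show "\<exists>u v. u < v \<and> (x0, u) \<in> apsnd uminus ` W \<and> (x0, v) \<in> apsnd uminus ` W"
    using left_tall unfolding mem_reflect_image by (metis minus_less_iff minus_minus)
  show "\<exists>u v. u < v \<and> (x1, u) \<in> apsnd uminus ` W \<and> (x1, v) \<in> apsnd uminus ` W"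
    using right_tall unfolding mem_reflect_image by (metis minus_less_iff minus_minus)
  have "closed_segment (apsnd uminus b) (apsnd uminus a) = apsnd uminus ` closed_segment a b"
    by (simp add: grid_symmetry_segment[OF grid_symmetry_reflect] closed_segment_commute)
  then show "closed_segment (apsnd uminus b) (apsnd uminus a) \<subseteq> apsnd uminus ` W"
    using sH(3) by auto
  have "closed_segment (apsnd uminus c) (apsnd uminus d) = apsnd uminus ` closed_segment c d"
    by (simp add: grid_symmetry_segment[OF grid_symmetry_reflect])
  then show "closed_segment (apsnd uminus c) (apsnd uminus d) \<subseteq> apsnd uminus ` W"
    using sV(3) by auto
qed (use sH sV in auto)

lemma cross_config_swap:
  "cross_config (prod.swap ` W) y0 y1 x0 x1
     (prod.swap c) (prod.swap d) (prod.swap a) (prod.swap b)"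
proof
  show "prod.swap ` W \<subseteq> {y0..y1} \<times> {x0..x1}"
    using box by auto
  show "ortho_convex (prod.swap ` W)"
    by (rule ortho_convex_swap[OF ortho_convex])
  show "\<exists>u v. u < v \<and> (u, x0) \<in> prod.swap ` W \<and> (v, x0) \<in> prod.swap ` W"
    using left_tall by (simp add: mem_swap_image)
  show "\<exists>u v. u < v \<and> (u, x1) \<in> prod.swap ` W \<and> (v, x1) \<in> prod.swap ` W"
    using right_tall by (simp add: mem_swap_image)
  show "\<exists>u v. u < v \<and> (y0, u) \<in> prod.swap ` W \<and> (y0, v) \<in> prod.swap ` W"
    using bottom_wide by (simp add: mem_swap_image)
  show "\<exists>u v. u < v \<and> (y1, u) \<in> prod.swap ` W \<and> (y1, v) \<in> prod.swap ` W"
    using top_wide by (simp add: mem_swap_image)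
  show "closed_segment (prod.swap c) (prod.swap d) \<subseteq> prod.swap ` W"
    using sV(3) by (auto simp: grid_symmetry_segment[OF grid_symmetry_swap, symmetric])
  show "closed_segment (prod.swap a) (prod.swap b) \<subseteq> prod.swap ` W"
    using sH(3) by (auto simp: grid_symmetry_segment[OF grid_symmetry_swap, symmetric])
qed (use sH sV in auto)

end

text \<open>Extreme corners at the bottom of the box; the other three orientations are reduced to this
  one by grid symmetries.\<close>

locale bottom_T = cross_config +
  assumes bottom_corners: "(x0, y0) \<in> W" "(x1, y0) \<in> W"
    and top_corners: "(x0, y1) \<notin> W" "(x1, y1) \<notin> W"
begin

abbreviation cross :: "pt set" where
  "cross \<equiv> closed_segment a b \<union> closed_segment c d"

lemma bottom_side: "x0 \<le> x \<Longrightarrow> x \<le> x1 \<Longrightarrow> (x, y0) \<in> W"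
  using ortho_convex_row[OF ortho_convex bottom_corners] by (simp add: closed_segment_eq_real_ivl)

lemma interior_downward:
  assumes "(x, y') \<in> interior W" "y0 < y" "y \<le> y'"
  shows "(x, y) \<in> interior W"
proof -
  obtain A B where AB: "open A" "open B" "x \<in> A" "y' \<in> B" "A \<times> B \<subseteq> W"
    using assms(1) unfolding mem_interior_iff_Times by blast
  have "A \<times> ({y0<..<y'} \<union> B) \<subseteq> W"
  proof clarify
    fix x' v assume x': "x' \<in> A" and v: "v \<in> {y0<..<y'} \<union> B"
    show "(x', v) \<in> W"
    proof (cases "v \<in> B")
      case False
      have "(x', y') \<in> W" using AB x' by blast
      then have "(x', y0) \<in> W" using bottom_side box_bounds(1,2) by metis
      moreover have "v \<in> closed_segment y0 y'" using False v by (auto simp: closed_segment_eq_real_ivl)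
      ultimately show ?thesis by (rule ortho_convex_column[OF ortho_convex _ \<open>(x', y') \<in> W\<close>])
    qed (use AB x' in blast)
  qed
  moreover have "y \<in> {y0<..<y'} \<union> B" using assms(2,3) AB(4) by (cases "y = y'") auto
  moreover have "open ({y0<..<y'} \<union> B)" using AB(2) by auto
  ultimately show ?thesis
    unfolding mem_interior_iff_Times using AB(1,3) by blast
qed

lemma L_path_meets_cross_if_corner_exterior:
  assumes p: "(px, py) \<notin> interior W" and q: "(qx, qy) \<notin> interior W"
    and r: "(qx, py) \<notin> interior W"
    and z: "(zx, zy) \<in> L_path (px, py) (qx, qy)" "(zx, zy) \<in> interior W"
  shows "L_path (px, py) (qx, qy) \<inter> cross \<noteq> {}"
proof -
  from z(1) consider "zy = py" "zx \<in> closed_segment px qx" | "zx = qx" "zy \<in> closed_segment py qy"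
    by (auto simp: mem_L_path)
  then show ?thesis
  proof cases
    case 1
    then have "sH_x py \<in> closed_segment px qx"
      using row_chord_meets_sH[OF p r] z(2) by blast
    moreover have "(sH_x py, py) \<in> closed_segment a b"
      using interior_in_open_box[OF z(2)] 1(1) by (intro sH_point) auto
    ultimately have "(sH_x py, py) \<in> L_path (px, py) (qx, qy) \<inter> cross" by (simp add: mem_L_path)
    then show ?thesis by blast
  next
    case 2
    then have "sV_y qx \<in> closed_segment py qy"
      using column_chord_meets_sV[OF r q] z(2) by blast
    moreover have "(qx, sV_y qx) \<in> closed_segment c d"
      using interior_in_open_box[OF z(2)] 2(1) by (intro sV_point) auto
    ultimately have "(qx, sV_y qx) \<in> L_path (px, py) (qx, qy) \<inter> cross" by (simp add: mem_L_path)
    then show ?thesis by blast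
  qed
qed

lemma L_path_meets_cross_if_corner_interior_above:
  assumes p: "(px, py) \<notin> interior W" and q: "(qx, qy) \<notin> interior W"
    and r: "(qx, py) \<in> interior W" and up: "py < qy"
    and z: "(zx, zy) \<in> L_path (qx, qy) (px, py)" "(zx, zy) \<in> interior W"
  shows "L_path (px, py) (qx, qy) \<inter> cross \<noteq> {}"
proof -
  have py: "y0 < py" "py < y1" using interior_in_open_box[OF r] by simp_all
  have above: "(px, y) \<notin> interior W" if "py \<le> y" for y
    using interior_downward[of px y py] py(1) that p by blast
  have z': "zy = qy" "zx \<in> closed_segment qx px"
    using z(1) above[of zy] z(2) up by (auto simp: mem_L_path closed_segment_eq_real_ivl)
  have "sH_x qy \<in> closed_segment qx px"
    using row_chord_meets_sH[OF q above[OF less_imp_le[OF up]] z'(2)] z(2) z'(1) by simp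
  moreover have "px \<notin> open_segment (sH_x py) qx" by (rule sH_beside_interior[OF p r])
  ultimately consider "sH_x py \<in> closed_segment px qx" | "qx \<in> closed_segment (sH_x py) (sH_x qy)"
    using real_closed_segment_between by blast
  then show ?thesis
  proof cases
    case 1
    moreover have "(sH_x py, py) \<in> closed_segment a b" using py by (intro sH_point) auto
    ultimately have "(sH_x py, py) \<in> L_path (px, py) (qx, qy) \<inter> cross" by (simp add: mem_L_path)
    then show ?thesis by blast
  next
    case 2
    moreover have "qy \<in> {y0..y1}" using interior_in_open_box[OF z(2)] z'(1) by simp
    ultimately obtain y where "y \<in> closed_segment py qy" "(qx, y) \<in> closed_segment a b"
      using py by (elim sH_meets_column) auto
    then have "(qx, y) \<in> L_path (px, py) (qx, qy) \<inter> cross" by (simp add: mem_L_path)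
    then show ?thesis by blast
  qed
qed

lemma L_path_meets_cross_if_corner_interior_below:
  assumes p: "(px, py) \<notin> interior W" and q: "(qx, qy) \<notin> interior W"
    and r: "(qx, py) \<in> interior W" and down: "qy < py"
    and z: "(zx, zy) \<in> L_path (qx, qy) (px, py)" "(zx, zy) \<in> interior W"
  shows "L_path (px, py) (qx, qy) \<inter> cross \<noteq> {}"
proof -
  have qx: "x0 < qx" "qx < x1" using interior_in_open_box[OF r] by simp_all
  have "qy \<le> y0"
  proof (rule ccontr)
    assume "\<not> qy \<le> y0"
    then have "(qx, qy) \<in> interior W" using interior_downward[OF r] down by simp
    then show False using q by simp
  qed
  then have below: "(x, qy) \<notin> interior W" for x using interior_in_open_box by force
  have z': "zx = px" "zy \<in> closed_segment qy py"
    using z(1) below[of zx] z(2) by (auto simp: mem_L_path)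
  have px: "x0 < px" "px < x1" using interior_in_open_box[OF z(2)] z'(1) by simp_all
  have "sV_y px \<in> closed_segment qy py"
    using column_chord_meets_sV[OF below p z'(2)] z(2) z'(1) by simp
  then have "sV_y px \<le> py" using down by (simp add: closed_segment_eq_real_ivl)
  have "(qx, sV_y qx) \<in> closed_segment c d" using qx by (intro sV_point) auto
  then have "y0 \<le> sV_y qx" using sV(3) box_bounds(3) by blast
  show ?thesis
  proof (cases "sV_y qx \<le> py")
    case True
    then have "(qx, sV_y qx) \<in> L_path (px, py) (qx, qy)"
      using \<open>qy \<le> y0\<close> \<open>y0 \<le> sV_y qx\<close> by (simp add: mem_L_path closed_segment_eq_real_ivl)
    then show ?thesis using \<open>(qx, sV_y qx) \<in> closed_segment c d\<close> by blast
  next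
    case False
    then have "py \<in> closed_segment (sV_y px) (sV_y qx)"
      using \<open>sV_y px \<le> py\<close> by (simp add: closed_segment_eq_real_ivl)
    then obtain x where "x \<in> closed_segment px qx" "(x, py) \<in> closed_segment c d"
      using px qx by (elim sV_meets_row) auto
    then have "(x, py) \<in> L_path (px, py) (qx, qy) \<inter> cross" by (simp add: mem_L_path)
    then show ?thesis by blast
  qed
qed

lemma L_path_meets_cross:
  assumes "p \<notin> interior W" "q \<notin> interior W"
    and "L_path p q \<inter> interior W \<noteq> {}" "L_path q p \<inter> interior W \<noteq> {}"
  shows "L_path p q \<inter> cross \<noteq> {}"
proof -
  obtain px py qx qy where pq: "p = (px, py)" "q = (qx, qy)" by (metis prod.exhaust)
  obtain zx zy where z: "(zx, zy) \<in> L_path p q" "(zx, zy) \<in> interior W"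
    using assms(3) by auto
  obtain zx' zy' where z': "(zx', zy') \<in> L_path q p" "(zx', zy') \<in> interior W"
    using assms(4) by auto
  show ?thesis
  proof (cases "(qx, py) \<in> interior W")
    case False
    then show ?thesis
      using L_path_meets_cross_if_corner_exterior assms(1,2) z unfolding pq by blast
  next
    case True
    then have "py \<noteq> qy" using assms(2) pq by auto
    then consider "py < qy" | "qy < py" by linarith
    then show ?thesis
      using L_path_meets_cross_if_corner_interior_above L_path_meets_cross_if_corner_interior_below
        True assms(1,2) z' unfolding pq by (cases; blast)
  qed
qed

lemma skeleton_cross: "skeleton W {closed_segment a b, closed_segment c d}"
  unfolding skeleton_def
proof (intro conjI allI impI)
  have "a \<noteq> b" "c \<noteq> d" using sH(1,2) sV(1,2) x0_less_x1 y0_less_y1 by auto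
  then show "\<forall>s\<in>{closed_segment a b, closed_segment c d}. is_segment s"
    unfolding is_segment_def by blast
  show "\<Union> {closed_segment a b, closed_segment c d} \<subseteq> W" using sH(3) sV(3) by simp
  fix p q assume "p \<notin> interior W \<and> q \<notin> interior W \<and> (\<forall>P\<in>L_paths p q. P \<inter> interior W \<noteq> {})"
  then have "L_path p q \<inter> cross \<noteq> {}" "L_path q p \<inter> cross \<noteq> {}"
    using L_path_meets_cross unfolding L_paths_eq by auto
  then show "\<forall>P\<in>L_paths p q. \<exists>s\<in>{closed_segment a b, closed_segment c d}. P \<inter> s \<noteq> {}"
    unfolding L_paths_eq by blast
qed

lemma stem_subset:
  obtains tl tr where "x0 < tl" "tl < tr" "tr < x1" "{tl..tr} \<times> {y0..y1} \<subseteq> W"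
proof -
  obtain tl tr where t: "tl < tr" "(tl, y1) \<in> W" "(tr, y1) \<in> W" using top_wide by blast
  have "x0 \<le> tl" "tr \<le> x1" using box_bounds(1)[OF t(2)] box_bounds(2)[OF t(3)] .
  moreover have "tl \<noteq> x0" "tr \<noteq> x1" using t top_corners by auto
  ultimately have tl: "x0 < tl" and tr: "tr < x1" by simp_all
  have "{tl..tr} \<times> {y0} \<subseteq> W" using bottom_side tl tr by auto
  moreover have "{tl..tr} \<times> {y1} \<subseteq> W"
    using ortho_convex_row[OF ortho_convex t(2,3)] t(1) by (auto simp: closed_segment_eq_real_ivl)
  ultimately have "{tl..tr} \<times> closed_segment y0 y1 \<subseteq> W"
    by (rule ortho_convex_between_rows[OF ortho_convex])
  moreover have "closed_segment y0 y1 = {y0..y1}"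
    using y0_less_y1 by (simp add: closed_segment_eq_real_ivl)
  ultimately show thesis using that[OF tl t(1) tr] by simp
qed

lemma side_block:
  assumes "x = x0 \<or> x = x1" "{t} \<times> {y0..y1} \<subseteq> W"
  obtains h where "y0 < h" "closed_segment x t \<times> {y0..h} \<subseteq> W"
proof -
  obtain u h where uh: "u < h" "(x, u) \<in> W" "(x, h) \<in> W"
    using assms(1) left_tall right_tall by blast
  then have h: "y0 < h" "h \<le> y1" using box_bounds(3)[OF uh(2)] box_bounds(4)[OF uh(3)] by simp_all
  have "{x} \<times> {y0} \<subseteq> W" "{x} \<times> {h} \<subseteq> W" using assms(1) bottom_corners uh(3) by auto
  then have "{x} \<times> closed_segment y0 h \<subseteq> W"
    by (rule ortho_convex_between_rows[OF ortho_convex])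
  moreover have "{t} \<times> closed_segment y0 h \<subseteq> W"
    using assms(2) h by (auto simp: closed_segment_eq_real_ivl)
  ultimately have "closed_segment x t \<times> closed_segment y0 h \<subseteq> W"
    by (rule ortho_convex_between_columns[OF ortho_convex])
  moreover have "closed_segment y0 h = {y0..h}" using h(1) by (simp add: closed_segment_eq_real_ivl)
  ultimately show thesis using that[OF h(1)] by simp
qed

lemma interior_T_shape:
  obtains tl tr hL hR where "x0 < tl" "tl < tr" "tr < x1" "y0 < hL" "y0 < hR"
    "{tl<..<tr} \<times> {y0<..<y1} \<subseteq> interior W"
    "{x0<..<tl} \<times> {y0<..<hL} \<subseteq> interior W"
    "{tr<..<x1} \<times> {y0<..<hR} \<subseteq> interior W"
proof -
  obtain tl tr where T: "x0 < tl" "tl < tr" "tr < x1" and stem: "{tl..tr} \<times> {y0..y1} \<subseteq> W"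
    by (rule stem_subset)
  have "{tl} \<times> {y0..y1} \<subseteq> W" "{tr} \<times> {y0..y1} \<subseteq> W" using stem T(2) by auto
  then obtain hL hR where hL: "y0 < hL" "closed_segment x0 tl \<times> {y0..hL} \<subseteq> W"
    and hR: "y0 < hR" "closed_segment x1 tr \<times> {y0..hR} \<subseteq> W"
    by (metis side_block)
  have "closed_segment x0 tl = {x0..tl}" "closed_segment x1 tr = {tr..x1}"
    using T by (simp_all add: closed_segment_eq_real_ivl)
  then have left: "{x0..tl} \<times> {y0..hL} \<subseteq> W" and right: "{tr..x1} \<times> {y0..hR} \<subseteq> W"
    using hL(2) hR(2) by simp_all
  show thesis
    by (rule that[of tl tr hL hR, OF T hL(1) hR(1)];
        rule rectangle_subset_interior, fact stem left right)
qed

lemma singleton_skeleton_reaches_sides: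
  assumes sk: "skeleton W {s}"
  shows "y1 \<in> snd ` s" "x0 \<in> fst ` s" "x1 \<in> fst ` s"
proof -
  have "is_segment s" using sk unfolding skeleton_def by simp
  then have closed: "closed (snd ` s)" "closed (fst ` s)" by (simp_all add: closed_projections_segment)
  obtain tl tr hL hR where T: "x0 < tl" "tl < tr" "tr < x1" "y0 < hL" "y0 < hR"
    "{tl<..<tr} \<times> {y0<..<y1} \<subseteq> interior W"
    "{x0<..<tl} \<times> {y0<..<hL} \<subseteq> interior W"
    "{tr<..<x1} \<times> {y0<..<hR} \<subseteq> interior W"
    by (rule interior_T_shape)
  have "{y0<..<y1} \<subseteq> snd ` s"
  proof
    fix t assume "t \<in> {y0<..<y1}"
    then have "((tl + tr) / 2, t) \<in> {tl<..<tr} \<times> {y0<..<y1}" using T(2) by simp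
    then have "((tl + tr) / 2, t) \<in> interior W" using T(6) by blast
    then show "t \<in> snd ` s" using skeleton_meets_row[OF sk] by blast
  qed
  then show "y1 \<in> snd ` s" by (rule closed_contains_interval_ends(2)[OF closed(1) y0_less_y1])
  have "{x0<..<tl} \<subseteq> fst ` s"
  proof
    fix t assume "t \<in> {x0<..<tl}"
    then have "(t, (y0 + hL) / 2) \<in> {x0<..<tl} \<times> {y0<..<hL}" using T(4) by simp
    then have "(t, (y0 + hL) / 2) \<in> interior W" using T(7) by blast
    then show "t \<in> fst ` s" using skeleton_meets_column[OF sk] by blast
  qed
  then show "x0 \<in> fst ` s" by (rule closed_contains_interval_ends(1)[OF closed(2) T(1)])
  have "{tr<..<x1} \<subseteq> fst ` s"
  proof
    fix t assume "t \<in> {tr<..<x1}"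
    then have "(t, (y0 + hR) / 2) \<in> {tr<..<x1} \<times> {y0<..<hR}" using T(5) by simp
    then have "(t, (y0 + hR) / 2) \<in> interior W" using T(8) by blast
    then show "t \<in> fst ` s" using skeleton_meets_column[OF sk] by blast
  qed
  then show "x1 \<in> fst ` s" by (rule closed_contains_interval_ends(2)[OF closed(2) T(3)])
qed

lemma no_singleton_skeleton: "\<not> skeleton W {s}"
proof
  assume sk: "skeleton W {s}"
  have "s \<subseteq> W" using sk unfolding skeleton_def by simp
  obtain m1 where "m1 \<in> s" "snd m1 = y1"
    using singleton_skeleton_reaches_sides(1)[OF sk] by (metis imageE)
  obtain m2 where "m2 \<in> s" "fst m2 = x0"
    using singleton_skeleton_reaches_sides(2)[OF sk] by (metis imageE)
  obtain m3 where "m3 \<in> s" "fst m3 = x1"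
    using singleton_skeleton_reaches_sides(3)[OF sk] by (metis imageE)
  have m: "m1 \<in> s" "m2 \<in> s" "m3 \<in> s" by fact+
  have top: "(fst m1, y1) \<in> W" and left: "(x0, snd m2) \<in> W" and right: "(x1, snd m3) \<in> W"
    using \<open>s \<subseteq> W\<close> m \<open>snd m1 = y1\<close> \<open>fst m2 = x0\<close> \<open>fst m3 = x1\<close>
    by (metis prod.collapse subsetD)+
  have "fst m1 \<noteq> x0" "fst m1 \<noteq> x1" "snd m2 \<noteq> y1" "snd m3 \<noteq> y1"
    using top left right top_corners by auto
  then have m1: "x0 < fst m1" "fst m1 < x1" and m2: "snd m2 < y1" and m3: "snd m3 < y1"
    using box_bounds[OF top] box_bounds[OF left] box_bounds[OF right] by simp_all
  have "is_segment s" using sk unfolding skeleton_def by simp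
  then obtain A B where "s = closed_segment A B" unfolding is_segment_def by blast
  then have "collinear {m1, m2, m3}"
    using m by (intro collinear_subset[OF collinear_closed_segment[of A B]]) auto
  then consider "m1 \<in> closed_segment m2 m3" | "m2 \<in> closed_segment m3 m1" | "m3 \<in> closed_segment m1 m2"
    unfolding collinear_between_cases between_mem_segment by blast
  then show False
  proof cases
    case 1
    then have "snd m1 \<in> closed_segment (snd m2) (snd m3)" by (rule closed_segment_coordinates)
    then show False
      using \<open>snd m1 = y1\<close> m2 m3 by (auto simp: closed_segment_eq_real_ivl split: if_splits)
  next
    case 2
    then have "fst m2 \<in> closed_segment (fst m3) (fst m1)" by (rule closed_segment_coordinates)
    then show False using \<open>fst m2 = x0\<close> \<open>fst m3 = x1\<close> m1
      by (auto simp: closed_segment_eq_real_ivl split: if_splits)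
  next
    case 3
    then have "fst m3 \<in> closed_segment (fst m1) (fst m2)" by (rule closed_segment_coordinates)
    then show False using \<open>fst m2 = x0\<close> \<open>fst m3 = x1\<close> m1
      by (auto simp: closed_segment_eq_real_ivl split: if_splits)
  qed
qed

lemma two_le_card_skeleton:
  assumes "skeleton W S" "finite S"
  shows "2 \<le> card S"
proof -
  obtain tl tr where "tl < tr" "{tl<..<tr} \<times> {y0<..<y1} \<subseteq> interior W"
    by (rule interior_T_shape)
  then have "((tl + tr) / 2, (y0 + y1) / 2) \<in> interior W" using y0_less_y1 by auto
  then have "S \<noteq> {}" using skeleton_meets_row[OF assms(1)] by blast
  moreover have "card S \<noteq> 1" using assms(1) no_singleton_skeleton by (metis card_1_singletonE)
  ultimately show ?thesis using assms(2) by (cases "card S") (auto simp: Suc_le_eq)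
qed

lemma minimum_skeleton_cross: "minimum_skeleton W {closed_segment a b, closed_segment c d}"
proof -
  have "card {closed_segment a b, closed_segment c d} \<le> 2" by (simp add: card_insert_le_m1)
  then show ?thesis
    unfolding minimum_skeleton_def using skeleton_cross two_le_card_skeleton by fastforce
qed

end

context cross_config
begin

lemma minimum_skeleton_cross_if_bottom_corners:
  assumes "(x0, y0) \<in> W" "(x1, y0) \<in> W" "(x0, y1) \<notin> W" "(x1, y1) \<notin> W"
  shows "minimum_skeleton W {closed_segment a b, closed_segment c d}"
proof -
  interpret bottom_T W x0 x1 y0 y1 a b c d by unfold_locales (fact assms)+
  show ?thesis by (rule minimum_skeleton_cross)
qed

lemma minimum_skeleton_cross_if_top_corners:
  assumes "(x0, y1) \<in> W" "(x1, y1) \<in> W" "(x0, y0) \<notin> W" "(x1, y0) \<notin> W"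
  shows "minimum_skeleton W {closed_segment a b, closed_segment c d}"
proof -
  let ?f = "apsnd uminus :: pt \<Rightarrow> pt"
  interpret reflected: cross_config "?f ` W" x0 x1 "-y1" "-y0" "?f b" "?f a" "?f c" "?f d"
    by (rule cross_config_reflect)
  have "minimum_skeleton (?f ` W) {closed_segment (?f b) (?f a), closed_segment (?f c) (?f d)}"
    using assms
    by (intro reflected.minimum_skeleton_cross_if_bottom_corners) (simp_all add: mem_reflect_image)
  then have "minimum_skeleton W ((`) ?f ` {closed_segment (?f b) (?f a), closed_segment (?f c) (?f d)})"
    by (rule minimum_skeleton_grid_symmetry_image[OF grid_symmetry_reflect])
  then show ?thesis
    by (simp add: grid_symmetry_segment[OF grid_symmetry_reflect] closed_segment_commute
        grid_symmetry_involution[OF grid_symmetry_reflect])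
qed

lemma minimum_skeleton_cross_if_aligned_corners:
  assumes "W \<inter> ({x0, x1} \<times> {y0, y1}) = {p, q}" "p \<noteq> q" "fst p = fst q \<or> snd p = snd q"
  shows "minimum_skeleton W {closed_segment a b, closed_segment c d}"
proof -
  interpret swapped: cross_config "prod.swap ` W" y0 y1 x0 x1
      "prod.swap c" "prod.swap d" "prod.swap a" "prod.swap b"
    by (rule cross_config_swap)
  have swap_back: "minimum_skeleton W {closed_segment a b, closed_segment c d}"
    if "minimum_skeleton (prod.swap ` W)
          {closed_segment (prod.swap c) (prod.swap d), closed_segment (prod.swap a) (prod.swap b)}"
    using minimum_skeleton_grid_symmetry_image[OF grid_symmetry_swap that]
    by (simp add: grid_symmetry_segment[OF grid_symmetry_swap] insert_commute)
  show ?thesis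
    using two_aligned_corners_cases[OF x0_less_x1 y0_less_y1 assms]
      minimum_skeleton_cross_if_bottom_corners minimum_skeleton_cross_if_top_corners
      swap_back[OF swapped.minimum_skeleton_cross_if_bottom_corners]
      swap_back[OF swapped.minimum_skeleton_cross_if_top_corners]
    by (auto simp: mem_swap_image)
qed

end

section \<open>Rectilinear polygons\<close>

text \<open>Lemmas about a pair of coordinate functions \<open>(c1, c2)\<close> treat horizontal and vertical
  edges, and the minimum and maximum of a coordinate, at once.\<close>

definition coordinates :: "(pt \<Rightarrow> real) \<Rightarrow> (pt \<Rightarrow> real) \<Rightarrow> bool" where
  "coordinates c1 c2 \<longleftrightarrow> (c1 = fst \<and> c2 = snd) \<or> (c1 = snd \<and> c2 = fst)"

lemma coordinates_fst_snd: "coordinates fst snd" "coordinates snd fst"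
  unfolding coordinates_def by simp_all

lemma coordinates_swap: "coordinates c1 c2 \<Longrightarrow> coordinates c2 c1"
  unfolding coordinates_def by blast

lemma coordinates_eq_iff: "coordinates c1 c2 \<Longrightarrow> u = w \<longleftrightarrow> c1 u = c1 w \<and> c2 u = c2 w"
  unfolding coordinates_def by (auto simp: prod_eq_iff)

lemma coordinates_closed_segment:
  "coordinates c1 c2 \<Longrightarrow> z \<in> closed_segment u w \<Longrightarrow> c1 z \<in> closed_segment (c1 u) (c1 w)"
  unfolding coordinates_def using closed_segment_coordinates by blast

lemma collinear_if_coordinate_const:
  assumes "coordinates c1 c2" "\<And>z. z \<in> S \<Longrightarrow> c1 z = h"
  shows "collinear S"
proof -
  define v :: pt where "v = (if c1 = fst then (0, 1) else (1, 0))"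
  have "x - y = (c2 x - c2 y) *\<^sub>R v" if "x \<in> S" "y \<in> S" for x y
    using assms(1) assms(2)[OF that(1)] assms(2)[OF that(2)]
    by (auto simp: coordinates_def v_def prod_eq_iff)
  then show ?thesis unfolding collinear_def by blast
qed

lemma interior_not_extreme:
  assumes "z \<in> interior S" "coordinates c1 c2"
  obtains z1 z2 where "z1 \<in> S" "z2 \<in> S" "c1 z1 < c1 z" "c1 z < c1 z2"
proof -
  obtain e where e: "e > 0" "ball z e \<subseteq> S" using assms(1) by (meson mem_interior)
  define v :: pt where "v = (if c1 = fst then (e / 2, 0) else (0, e / 2))"
  have "norm v < e" using e(1) by (simp add: v_def norm_Pair)
  then have "z - v \<in> S" "z + v \<in> S" using e(2) by (auto simp: dist_norm)
  moreover have "c1 (z - v) < c1 z" "c1 z < c1 (z + v)"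
    using assms(2) e(1) by (auto simp: coordinates_def v_def)
  ultimately show thesis by (rule that)
qed

lemma Suc_mod_neq: "2 \<le> n \<Longrightarrow> i < n \<Longrightarrow> Suc i mod n \<noteq> i"
  by (cases "Suc i < n") (auto simp: mod_Suc)

lemma Suc_Suc_mod_neq: "3 \<le> n \<Longrightarrow> i < n \<Longrightarrow> Suc (Suc i mod n) mod n \<noteq> i"
  by (cases "Suc i < n"; cases "Suc (Suc i) < n") (auto simp: mod_Suc)

lemma ex_pred_mod: "i < n \<Longrightarrow> \<exists>j<n. Suc j mod n = i"
  by (cases i) (auto intro: exI[of _ "n - 1"] exI[of _ "i - 1"])

locale rectilinear_polygon =
  fixes vs :: "pt list"
  assumes simple: "simple_polygon vs" and rectilinear: "rectilinear vs"
begin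

abbreviation \<omega> :: "pt set" where "\<omega> \<equiv> region vs"

lemma length_ge_3: "3 \<le> length vs"
  using simple unfolding simple_polygon_def by blast

lemma nth_eq_iff: "i < length vs \<Longrightarrow> j < length vs \<Longrightarrow> vs ! i = vs ! j \<longleftrightarrow> i = j"
  using simple unfolding simple_polygon_def by (simp add: nth_eq_iff_index_eq)

lemma not_collinear:
  "\<lbrakk>u \<in> set vs; v \<in> set vs; w \<in> set vs; u \<noteq> v; u \<noteq> w; v \<noteq> w\<rbrakk>
     \<Longrightarrow> \<not> collinear {u, v, w}"
  using simple unfolding simple_polygon_def by blast

lemma Suc_mod_less: "Suc i mod length vs < length vs"
  using length_ge_3 by (intro mod_less_divisor) linarith

lemma nxt_eq: "nxt vs i = vs ! (Suc i mod length vs)"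
  by (simp add: nxt_def)

lemma nxt_in_set: "nxt vs i \<in> set vs"
  using Suc_mod_less by (simp add: nxt_eq)

lemma nxt_neq: "i < length vs \<Longrightarrow> vs ! i \<noteq> nxt vs i"
  using nth_eq_iff[OF _ Suc_mod_less, of i] Suc_mod_neq[of "length vs" i] length_ge_3
  by (simp add: nxt_eq)

lemma edge_axis:
  "coordinates c1 c2 \<Longrightarrow> i < length vs \<Longrightarrow>
     c1 (vs ! i) = c1 (nxt vs i) \<or> c2 (vs ! i) = c2 (nxt vs i)"
  using rectilinear unfolding rectilinear_def edges_def coordinates_def by blast

lemma edge_axis_unique:
  "coordinates c1 c2 \<Longrightarrow> i < length vs \<Longrightarrow> c1 (vs ! i) = c1 (nxt vs i) \<Longrightarrow>
     c2 (vs ! i) \<noteq> c2 (nxt vs i)"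
  using nxt_neq coordinates_eq_iff by blast

lemma consecutive_edges_not_parallel:
  assumes c: "coordinates c1 c2" and i: "i < length vs"
    and "c1 (vs ! i) = c1 (nxt vs i)" "c1 (nxt vs i) = c1 (nxt vs (Suc i mod length vs))"
  shows False
proof -
  let ?n = "length vs"
  have "Suc (Suc i mod ?n) mod ?n \<noteq> i" by (rule Suc_Suc_mod_neq[OF length_ge_3 i])
  then have d1: "vs ! i \<noteq> nxt vs (Suc i mod ?n)"
    unfolding nxt_eq[of "Suc i mod ?n"] using nth_eq_iff[OF i Suc_mod_less] by simp
  have d2: "nxt vs i \<noteq> nxt vs (Suc i mod ?n)"
    using nxt_neq[OF Suc_mod_less, of i] unfolding nxt_eq[of i] .
  have "collinear {vs ! i, nxt vs i, nxt vs (Suc i mod ?n)}"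
    using assms by (intro collinear_if_coordinate_const[OF c, of _ "c1 (vs ! i)"]) auto
  moreover have "\<not> collinear {vs ! i, nxt vs i, nxt vs (Suc i mod ?n)}"
    by (rule not_collinear[OF nth_mem[OF i] nxt_in_set nxt_in_set nxt_neq[OF i] d1 d2])
  ultimately show False by contradiction
qed

lemma axis_edges_on_line_eq:
  assumes c: "coordinates c1 c2" and i: "i < length vs" and j: "j < length vs"
    and "c1 (vs ! i) = h" "c1 (nxt vs i) = h" "c1 (vs ! j) = h" "c1 (nxt vs j) = h"
  shows "i = j"
proof (rule ccontr)
  assume "i \<noteq> j"
  show False
  proof (cases "nxt vs i = vs ! j")
    case True
    then have "Suc i mod length vs = j" using nth_eq_iff[OF Suc_mod_less j] by (simp add: nxt_eq)
    show False
      by (rule consecutive_edges_not_parallel[OF c i])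
        (use assms(4-7) \<open>Suc i mod length vs = j\<close> in simp_all)
  next
    case False
    have "collinear {vs ! i, nxt vs i, vs ! j}"
      using assms(4-7) by (intro collinear_if_coordinate_const[OF c, of _ h]) auto
    moreover have "vs ! i \<noteq> vs ! j" using nth_eq_iff[OF i j] \<open>i \<noteq> j\<close> by simp
    then have "\<not> collinear {vs ! i, nxt vs i, vs ! j}"
      using not_collinear[OF nth_mem[OF i] nxt_in_set nth_mem[OF j] nxt_neq[OF i]] False by simp
    ultimately show False by contradiction
  qed
qed

lemma edge_subset_region: "i < length vs \<Longrightarrow> edge_seg vs i \<subseteq> \<omega>"
  unfolding region_def polygon_boundary_def by blast

lemma vertex_in_region:
  assumes "v \<in> set vs"
  shows "v \<in> \<omega>"
proof -
  obtain i where "i < length vs" "v = vs ! i" using assms by (auto simp: in_set_conv_nth)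
  then show ?thesis using edge_subset_region unfolding edge_seg_def by auto
qed

lemma compact_boundary: "compact (polygon_boundary vs)"
  unfolding polygon_boundary_def edge_seg_def by (intro compact_UN) auto

lemma compact_region: "compact \<omega>"
proof -
  let ?B = "polygon_boundary vs"
  have B: "closed ?B" "bounded ?B" using compact_boundary by (simp_all add: compact_imp_closed compact_imp_bounded)
  have "closure (inside ?B) \<subseteq> ?B \<union> inside ?B" by (rule closure_inside_subset[OF B(1)])
  moreover have "closure \<omega> = ?B \<union> closure (inside ?B)"
    unfolding region_def closure_Un using B(1) by simp
  ultimately have "closure \<omega> \<subseteq> \<omega>" unfolding region_def by blast
  then have "closed \<omega>" by (simp add: closure_subset_eq)
  moreover have "bounded \<omega>" unfolding region_def by (simp add: B(2) bounded_inside)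
  ultimately show ?thesis by (simp add: compact_eq_bounded_closed)
qed

lemma region_nonempty: "\<omega> \<noteq> {}"
proof -
  have "0 < length vs" using length_ge_3 by linarith
  then show ?thesis using vertex_in_region[OF nth_mem] by blast
qed

lemma boundary_if_not_interior:
  assumes "z \<in> \<omega>" "z \<notin> interior \<omega>"
  shows "\<exists>j<length vs. z \<in> edge_seg vs j"
proof -
  have "open (inside (polygon_boundary vs))"
    using compact_boundary by (simp add: compact_imp_closed open_inside)
  then have "inside (polygon_boundary vs) \<subseteq> interior \<omega>"
    unfolding region_def by (simp add: interior_maximal)
  then show ?thesis using assms unfolding region_def polygon_boundary_def by blast
qed

text \<open>Consecutive edges are perpendicular, so of the two edges at a vertex one runs along each
  axis.\<close>

lemma vertex_on_axis_edge:
  assumes c: "coordinates c1 c2" and j: "j < length vs"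
  shows "\<exists>i<length vs. c1 (vs ! i) = c1 (vs ! j) \<and> c1 (nxt vs i) = c1 (vs ! j) \<and> vs ! j \<in> edge_seg vs i"
proof (cases "c1 (vs ! j) = c1 (nxt vs j)")
  case True
  then show ?thesis using j unfolding edge_seg_def by auto
next
  case False
  obtain p where p: "p < length vs" "Suc p mod length vs = j" using ex_pred_mod[OF j] by blast
  then have np: "nxt vs p = vs ! j" by (simp add: nxt_eq)
  have "c1 (vs ! p) = c1 (nxt vs p)"
  proof (rule ccontr)
    assume "c1 (vs ! p) \<noteq> c1 (nxt vs p)"
    then have "c2 (vs ! p) = c2 (nxt vs p)" using edge_axis[OF c p(1)] by blast
    moreover have "c2 (nxt vs p) = c2 (nxt vs (Suc p mod length vs))"
      using edge_axis[OF c j] False np p(2) by simp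
    ultimately show False
      by (rule consecutive_edges_not_parallel[OF coordinates_swap[OF c] p(1)])
  qed
  then show ?thesis using p(1) np unfolding edge_seg_def by auto
qed

lemma extreme_point_on_axis_edge:
  assumes c: "coordinates c1 c2" and z: "z \<in> \<omega>"
    and extreme: "(\<forall>w\<in>\<omega>. c1 z \<le> c1 w) \<or> (\<forall>w\<in>\<omega>. c1 w \<le> c1 z)"
  shows "\<exists>i<length vs. c1 (vs ! i) = c1 z \<and> c1 (nxt vs i) = c1 z \<and> z \<in> edge_seg vs i"
proof -
  have "z \<notin> interior \<omega>"
  proof
    assume "z \<in> interior \<omega>"
    then obtain z1 z2 where "z1 \<in> \<omega>" "z2 \<in> \<omega>" "c1 z1 < c1 z" "c1 z < c1 z2"
      using c by (rule interior_not_extreme)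
    then show False using extreme by force
  qed
  then obtain j where j: "j < length vs" "z \<in> closed_segment (vs ! j) (nxt vs j)"
    using boundary_if_not_interior[OF z] unfolding edge_seg_def by blast
  show ?thesis
  proof (cases "c1 (vs ! j) = c1 (nxt vs j)")
    case True
    then have "c1 z = c1 (vs ! j)" using coordinates_closed_segment[OF c j(2)] by simp
    then show ?thesis using True j unfolding edge_seg_def by auto
  next
    case False
    have "c2 (vs ! j) = c2 (nxt vs j)" using edge_axis[OF c j(1)] False by blast
    then have c2z: "c2 z = c2 (vs ! j)" "c2 z = c2 (nxt vs j)"
      using coordinates_closed_segment[OF coordinates_swap[OF c] j(2)] by simp_all
    have "vs ! j \<in> \<omega>" "nxt vs j \<in> \<omega>" using vertex_in_region nxt_in_set j(1) by auto
    then have "c1 z = c1 (vs ! j) \<or> c1 z = c1 (nxt vs j)"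
      using coordinates_closed_segment[OF c j(2)] extreme
      by (auto simp: closed_segment_eq_real_ivl split: if_splits)
    then have "z = vs ! j \<or> z = vs ! (Suc j mod length vs)"
      using c2z coordinates_eq_iff[OF c] by (auto simp: nxt_eq)
    then show ?thesis
      using vertex_on_axis_edge[OF c j(1)] vertex_on_axis_edge[OF c Suc_mod_less] by blast
  qed
qed

lemma coordinate_bounds:
  assumes c: "coordinates c1 c2"
  shows "Inf (c1 ` \<omega>) \<in> c1 ` \<omega>" "Sup (c1 ` \<omega>) \<in> c1 ` \<omega>"
    and "z \<in> \<omega> \<Longrightarrow> Inf (c1 ` \<omega>) \<le> c1 z" "z \<in> \<omega> \<Longrightarrow> c1 z \<le> Sup (c1 ` \<omega>)"
proof -
  have "continuous_on \<omega> (\<lambda>z. fst z)" "continuous_on \<omega> (\<lambda>z. snd z)"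
    by (intro continuous_intros)+
  then have "continuous_on \<omega> c1" using c unfolding coordinates_def by auto
  then have "compact (c1 ` \<omega>)" using compact_region by (rule compact_continuous_image)
  then have K: "closed (c1 ` \<omega>)" "bdd_below (c1 ` \<omega>)" "bdd_above (c1 ` \<omega>)" "c1 ` \<omega> \<noteq> {}"
    using region_nonempty
    by (simp_all add: compact_imp_closed compact_imp_bounded bounded_imp_bdd_below bounded_imp_bdd_above)
  show "Inf (c1 ` \<omega>) \<in> c1 ` \<omega>" by (rule closed_contains_Inf[OF K(4,2,1)])
  show "Sup (c1 ` \<omega>) \<in> c1 ` \<omega>" by (rule closed_contains_Sup[OF K(4,3,1)])
  show "z \<in> \<omega> \<Longrightarrow> Inf (c1 ` \<omega>) \<le> c1 z" by (rule cInf_lower[OF imageI K(2)])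
  show "z \<in> \<omega> \<Longrightarrow> c1 z \<le> Sup (c1 ` \<omega>)" by (rule cSup_upper[OF imageI K(3)])
qed

lemma region_subset_bbox: "\<omega> \<subseteq> bbox \<omega>"
  using coordinate_bounds(3,4)[OF coordinates_fst_snd(1)] coordinate_bounds(3,4)[OF coordinates_fst_snd(2)]
  unfolding bbox_def xmin_def xmax_def ymin_def ymax_def by blast

lemma side_contains_two_points:
  assumes c: "coordinates c1 c2" and m: "m = Inf (c1 ` \<omega>) \<or> m = Sup (c1 ` \<omega>)"
  obtains u w where "u \<in> \<omega>" "w \<in> \<omega>" "c1 u = m" "c1 w = m" "c2 u < c2 w"
proof -
  have "m \<in> c1 ` \<omega>" using coordinate_bounds(1,2)[OF c] m by auto
  then obtain z where z: "z \<in> \<omega>" "c1 z = m" by auto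
  from m have "(\<forall>w\<in>\<omega>. c1 z \<le> c1 w) \<or> (\<forall>w\<in>\<omega>. c1 w \<le> c1 z)"
    using coordinate_bounds(3,4)[OF c] z(2) by auto
  then obtain i where i: "i < length vs" "c1 (vs ! i) = m" "c1 (nxt vs i) = m"
    using extreme_point_on_axis_edge[OF c z(1)] z(2) by auto
  then have "c2 (vs ! i) \<noteq> c2 (nxt vs i)" using edge_axis_unique[OF c i(1)] by simp
  moreover have "vs ! i \<in> \<omega>" "nxt vs i \<in> \<omega>" using vertex_in_region nxt_in_set i(1) by auto
  ultimately show thesis
  proof (cases "c2 (vs ! i) < c2 (nxt vs i)")
    case True
    then show thesis using that \<open>vs ! i \<in> \<omega>\<close> \<open>nxt vs i \<in> \<omega>\<close> i(2,3) by blast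
  next
    case False
    then have "c2 (nxt vs i) < c2 (vs ! i)" using \<open>c2 (vs ! i) \<noteq> c2 (nxt vs i)\<close> by simp
    then show thesis using that \<open>vs ! i \<in> \<omega>\<close> \<open>nxt vs i \<in> \<omega>\<close> i(2,3) by blast
  qed
qed

lemma mem_frontier_bbox:
  assumes c: "coordinates c1 c2"
  shows "z \<in> frontier (bbox \<omega>) \<longleftrightarrow> z \<in> bbox \<omega> \<and>
    (c1 z = Inf (c1 ` \<omega>) \<or> c1 z = Sup (c1 ` \<omega>) \<or> c2 z = Inf (c2 ` \<omega>) \<or> c2 z = Sup (c2 ` \<omega>))"
proof -
  have box: "bbox \<omega> = {xmin \<omega>..xmax \<omega>} \<times> {ymin \<omega>..ymax \<omega>}" unfolding bbox_def by auto
  then have "frontier (bbox \<omega>) = bbox \<omega> - {xmin \<omega><..<xmax \<omega>} \<times> {ymin \<omega><..<ymax \<omega>}"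
    unfolding frontier_def by (simp add: closure_Times interior_Times)
  then show ?thesis
    using c unfolding box coordinates_def xmin_def xmax_def ymin_def ymax_def by (cases z) auto
qed

lemma extreme_edgeE:
  assumes "e \<in> extreme_edges vs"
  obtains i where "i < length vs" "e = (vs ! i, nxt vs i)"
    "closed_segment (vs ! i) (nxt vs i) \<subseteq> frontier (bbox \<omega>)"
  using assms unfolding extreme_edges_def edges_def by blast

lemma axis_edge_on_side_is_extreme:
  assumes c: "coordinates c1 c2" and i: "i < length vs"
    and on_side: "c1 (vs ! i) = m" "c1 (nxt vs i) = m" "m = Inf (c1 ` \<omega>) \<or> m = Sup (c1 ` \<omega>)"
  shows "(vs ! i, nxt vs i) \<in> extreme_edges vs"
proof -
  have "closed_segment (vs ! i) (nxt vs i) \<subseteq> frontier (bbox \<omega>)"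
  proof
    fix z assume z: "z \<in> closed_segment (vs ! i) (nxt vs i)"
    then have "z \<in> bbox \<omega>" using edge_subset_region[OF i] region_subset_bbox unfolding edge_seg_def by blast
    moreover have "c1 z = m" using coordinates_closed_segment[OF c z] on_side(1,2) by simp
    ultimately show "z \<in> frontier (bbox \<omega>)" using mem_frontier_bbox[OF c] on_side(3) by auto
  qed
  then show ?thesis unfolding extreme_edges_def edges_def using i by blast
qed

lemma extreme_edge_on_side:
  assumes c: "coordinates c1 c2" and e: "(u, w) \<in> extreme_edges vs" and uw: "c1 u = c1 w"
  shows "c1 u = Inf (c1 ` \<omega>) \<or> c1 u = Sup (c1 ` \<omega>)"
proof (rule ccontr)
  assume off: "\<not> ?thesis"
  obtain i where i: "i < length vs" "u = vs ! i" "w = nxt vs i"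
    and frontier: "closed_segment u w \<subseteq> frontier (bbox \<omega>)"
    using e by (rule extreme_edgeE) auto
  have "c2 u \<noteq> c2 w" using edge_axis_unique[OF c i(1)] uw i(2,3) by simp
  have side: "c2 p = Inf (c2 ` \<omega>) \<or> c2 p = Sup (c2 ` \<omega>)" if "p \<in> closed_segment u w" for p
  proof -
    have "c1 p = c1 u" using coordinates_closed_segment[OF c that] uw by simp
    then show ?thesis using frontier that off mem_frontier_bbox[OF c, of p] by auto
  qed
  have "c2 (midpoint u w) = (c2 u + c2 w) / 2"
    using c by (auto simp: coordinates_def midpoint_def)
  then show False
    using side[of u] side[of w] side[of "midpoint u w"] \<open>c2 u \<noteq> c2 w\<close> by auto
qed

lemma extreme_edges_on_line_eq:
  assumes c: "coordinates c1 c2" and "e1 \<in> extreme_edges vs" "e2 \<in> extreme_edges vs"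
    and "c1 (fst e1) = h" "c1 (snd e1) = h" "c1 (fst e2) = h" "c1 (snd e2) = h"
  shows "e1 = e2"
proof -
  obtain i where i: "i < length vs" "e1 = (vs ! i, nxt vs i)" using assms(2) by (rule extreme_edgeE)
  obtain j where j: "j < length vs" "e2 = (vs ! j, nxt vs j)" using assms(3) by (rule extreme_edgeE)
  have "i = j" by (rule axis_edges_on_line_eq[OF c i(1) j(1)]) (use assms(4-7) i j in simp_all)
  then show ?thesis using i j by simp
qed

lemma cross_ends_on_opposite_sides:
  assumes c: "coordinates c1 c2"
    and e1: "e1 \<in> extreme_edges vs" "c1 (fst e1) = c1 (snd e1)" "a \<in> closed_segment (fst e1) (snd e1)"
    and e2: "e2 \<in> extreme_edges vs" "c1 (fst e2) = c1 (snd e2)" "b \<in> closed_segment (fst e2) (snd e2)"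
    and "e1 \<noteq> e2"
  shows "c1 a = Inf (c1 ` \<omega>) \<and> c1 b = Sup (c1 ` \<omega>) \<or> c1 a = Sup (c1 ` \<omega>) \<and> c1 b = Inf (c1 ` \<omega>)"
proof -
  have a: "c1 a = c1 (fst e1)" and b: "c1 b = c1 (fst e2)"
    using coordinates_closed_segment[OF c e1(3)] coordinates_closed_segment[OF c e2(3)] e1(2) e2(2)
    by simp_all
  have "c1 (fst e1) \<noteq> c1 (fst e2)"
    using extreme_edges_on_line_eq[OF c e1(1) e2(1)] e1(2) e2(2) \<open>e1 \<noteq> e2\<close> by force
  moreover have "c1 (fst e1) = Inf (c1 ` \<omega>) \<or> c1 (fst e1) = Sup (c1 ` \<omega>)"
    using extreme_edge_on_side[OF c, of "fst e1" "snd e1"] e1(1,2) by simp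
  moreover have "c1 (fst e2) = Inf (c1 ` \<omega>) \<or> c1 (fst e2) = Sup (c1 ` \<omega>)"
    using extreme_edge_on_side[OF c, of "fst e2" "snd e2"] e2(1,2) by simp
  ultimately show ?thesis unfolding a b by auto
qed

lemma cross_normal_form:
  assumes "is_cross vs sH sV"
  obtains a b c d where "sH = closed_segment a b" "snd a = ymin \<omega>" "snd b = ymax \<omega>"
    and "sV = closed_segment c d" "fst c = xmin \<omega>" "fst d = xmax \<omega>"
proof -
  obtain a b e1 e2 where H: "sH = closed_segment a b" "e1 \<in> horizontal_extreme_edges vs"
    "e2 \<in> horizontal_extreme_edges vs" "e1 \<noteq> e2"
    "a \<in> closed_segment (fst e1) (snd e1)" "b \<in> closed_segment (fst e2) (snd e2)"
    using assms unfolding is_cross_def by blast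
  have "snd a = ymin \<omega> \<and> snd b = ymax \<omega> \<or> snd a = ymax \<omega> \<and> snd b = ymin \<omega>"
    using cross_ends_on_opposite_sides[OF coordinates_fst_snd(2) _ _ H(5) _ _ H(6) H(4)] H(2,3)
    unfolding horizontal_extreme_edges_def ymin_def ymax_def by auto
  then obtain a' b' where ab: "sH = closed_segment a' b'" "snd a' = ymin \<omega>" "snd b' = ymax \<omega>"
    using H(1) closed_segment_commute by metis
  obtain c d e1 e2 where V: "sV = closed_segment c d" "e1 \<in> vertical_extreme_edges vs"
    "e2 \<in> vertical_extreme_edges vs" "e1 \<noteq> e2"
    "c \<in> closed_segment (fst e1) (snd e1)" "d \<in> closed_segment (fst e2) (snd e2)"
    using assms unfolding is_cross_def by blast
  have "fst c = xmin \<omega> \<and> fst d = xmax \<omega> \<or> fst c = xmax \<omega> \<and> fst d = xmin \<omega>"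
    using cross_ends_on_opposite_sides[OF coordinates_fst_snd(1) _ _ V(5) _ _ V(6) V(4)] V(2,3)
    unfolding vertical_extreme_edges_def xmin_def xmax_def by auto
  then obtain c' d' where "sV = closed_segment c' d'" "fst c' = xmin \<omega>" "fst d' = xmax \<omega>"
    using V(1) closed_segment_commute by metis
  with ab show thesis by (rule that)
qed

lemma edge_seg_Int:
  "\<lbrakk>i < length vs; j < length vs; i \<noteq> j\<rbrakk> \<Longrightarrow> edge_seg vs i \<inter> edge_seg vs j =
     (if Suc i mod length vs = j then {vs ! j} else if Suc j mod length vs = i then {vs ! i} else {})"
  using simple unfolding simple_polygon_def by blast

lemma box_corner_is_extreme_corner:
  assumes k: "k \<in> \<omega>" "fst k = xmin \<omega> \<or> fst k = xmax \<omega>" "snd k = ymin \<omega> \<or> snd k = ymax \<omega>"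
  shows "k \<in> extreme_corners vs"
proof -
  have extreme: "(\<forall>w\<in>\<omega>. c1 k \<le> c1 w) \<or> (\<forall>w\<in>\<omega>. c1 w \<le> c1 k)"
    if "coordinates c1 c2" "c1 k = Inf (c1 ` \<omega>) \<or> c1 k = Sup (c1 ` \<omega>)" for c1 c2
    using that(2) coordinate_bounds(3,4)[OF that(1)] by auto
  obtain i where i: "i < length vs" "snd (vs ! i) = snd k" "snd (nxt vs i) = snd k" "k \<in> edge_seg vs i"
    using extreme_point_on_axis_edge[OF coordinates_fst_snd(2) k(1) extreme[OF coordinates_fst_snd(2)]] k(3)
    unfolding ymin_def ymax_def by auto
  obtain j where j: "j < length vs" "fst (vs ! j) = fst k" "fst (nxt vs j) = fst k" "k \<in> edge_seg vs j"
    using extreme_point_on_axis_edge[OF coordinates_fst_snd(1) k(1) extreme[OF coordinates_fst_snd(1)]] k(2)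
    unfolding xmin_def xmax_def by auto
  have ei: "(vs ! i, nxt vs i) \<in> extreme_edges vs"
    by (rule axis_edge_on_side_is_extreme[OF coordinates_fst_snd(2) i(1) i(2,3)])
      (use k(3) in \<open>simp add: ymin_def ymax_def\<close>)
  have ej: "(vs ! j, nxt vs j) \<in> extreme_edges vs"
    by (rule axis_edge_on_side_is_extreme[OF coordinates_fst_snd(1) j(1) j(2,3)])
      (use k(2) in \<open>simp add: xmin_def xmax_def\<close>)
  have "i \<noteq> j"
  proof
    assume "i = j"
    then have "vs ! i = nxt vs i" using i(2,3) j(2,3) by (simp add: prod_eq_iff)
    then show False using nxt_neq[OF i(1)] by simp
  qed
  then have "(vs ! i, nxt vs i) \<noteq> (vs ! j, nxt vs j)" using nth_eq_iff[OF i(1) j(1)] by simp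
  moreover have "k \<in> edge_seg vs i \<inter> edge_seg vs j" using i(4) j(4) by blast
  then have "k = nxt vs i \<and> k = vs ! j \<or> k = vs ! i \<and> k = nxt vs j"
    using edge_seg_Int[OF i(1) j(1) \<open>i \<noteq> j\<close>] by (auto simp: nxt_eq split: if_splits)
  then have "k \<in> set vs" "k \<in> {fst (vs ! i, nxt vs i), snd (vs ! i, nxt vs i)}"
    "k \<in> {fst (vs ! j, nxt vs j), snd (vs ! j, nxt vs j)}"
    using nth_mem[OF i(1)] nth_mem[OF j(1)] by auto
  ultimately show ?thesis unfolding extreme_corners_def using ei ej by blast
qed

lemma extreme_corner_is_box_corner:
  assumes "v \<in> extreme_corners vs"
  shows "v \<in> \<omega>" "fst v = xmin \<omega> \<or> fst v = xmax \<omega>" "snd v = ymin \<omega> \<or> snd v = ymax \<omega>"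
proof -
  obtain e1 e2 where v: "v \<in> set vs" "e1 \<in> extreme_edges vs" "e2 \<in> extreme_edges vs" "e1 \<noteq> e2"
    "v \<in> {fst e1, snd e1}" "v \<in> {fst e2, snd e2}"
    using assms unfolding extreme_corners_def by blast
  show "v \<in> \<omega>" using vertex_in_region[OF v(1)] .
  have on_side: "c1 v = Inf (c1 ` \<omega>) \<or> c1 v = Sup (c1 ` \<omega>)"
    if "coordinates c1 c2" "e \<in> extreme_edges vs" "v \<in> {fst e, snd e}" "c1 (fst e) = c1 (snd e)"
    for c1 c2 e
    using extreme_edge_on_side[OF that(1), of "fst e" "snd e"] that(2-4) by auto
  have axis: "fst (fst e) = fst (snd e) \<or> snd (fst e) = snd (snd e)" if e: "e \<in> extreme_edges vs" for e
  proof -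
    obtain i where "i < length vs" "e = (vs ! i, nxt vs i)" using e by (rule extreme_edgeE)
    then show ?thesis using edge_axis[OF coordinates_fst_snd(1)] by simp
  qed
  have not_parallel: False
    if "coordinates c1 c2" "c1 (fst e1) = c1 (snd e1)" "c1 (fst e2) = c1 (snd e2)" for c1 c2
  proof -
    have "c1 (fst e1) = c1 v" "c1 (fst e2) = c1 v" using v(5,6) that(2,3) by auto
    then have "e1 = e2" using extreme_edges_on_line_eq[OF that(1) v(2,3)] that(2,3) by simp
    then show False using v(4) by simp
  qed
  have "fst (fst e1) = fst (snd e1) \<and> snd (fst e2) = snd (snd e2) \<or>
      snd (fst e1) = snd (snd e1) \<and> fst (fst e2) = fst (snd e2)"
    using axis[OF v(2)] axis[OF v(3)] not_parallel[OF coordinates_fst_snd(1)]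
      not_parallel[OF coordinates_fst_snd(2)] by blast
  then show "fst v = xmin \<omega> \<or> fst v = xmax \<omega>" "snd v = ymin \<omega> \<or> snd v = ymax \<omega>"
    using on_side[OF coordinates_fst_snd(1)] on_side[OF coordinates_fst_snd(2)] v(2,3,5,6)
    unfolding xmin_def xmax_def ymin_def ymax_def by metis+
qed

lemma extreme_corners_eq: "extreme_corners vs = \<omega> \<inter> ({xmin \<omega>, xmax \<omega>} \<times> {ymin \<omega>, ymax \<omega>})"
proof (intro equalityI subsetI)
  fix v assume "v \<in> extreme_corners vs"
  then show "v \<in> \<omega> \<inter> ({xmin \<omega>, xmax \<omega>} \<times> {ymin \<omega>, ymax \<omega>})"
    using extreme_corner_is_box_corner[of v] by (auto simp: prod_eq_iff)
next
  fix k assume "k \<in> \<omega> \<inter> ({xmin \<omega>, xmax \<omega>} \<times> {ymin \<omega>, ymax \<omega>})"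
  then show "k \<in> extreme_corners vs"
    using box_corner_is_extreme_corner[of k] by auto
qed

lemma nontrivial_row:
  assumes "y = ymin \<omega> \<or> y = ymax \<omega>"
  shows "\<exists>u v. u < v \<and> (u, y) \<in> \<omega> \<and> (v, y) \<in> \<omega>"
proof -
  obtain u w where "u \<in> \<omega>" "w \<in> \<omega>" "snd u = y" "snd w = y" "fst u < fst w"
    using side_contains_two_points[OF coordinates_fst_snd(2)] assms unfolding ymin_def ymax_def by blast
  then show ?thesis by (metis prod.collapse)
qed

lemma nontrivial_column:
  assumes "x = xmin \<omega> \<or> x = xmax \<omega>"
  shows "\<exists>u v. u < v \<and> (x, u) \<in> \<omega> \<and> (x, v) \<in> \<omega>"
proof -
  obtain u w where "u \<in> \<omega>" "w \<in> \<omega>" "fst u = x" "fst w = x" "snd u < snd w"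
    using side_contains_two_points[OF coordinates_fst_snd(1)] assms unfolding xmin_def xmax_def by blast
  then show ?thesis by (metis prod.collapse)
qed

lemma cross_config_region:
  assumes "rect_convex \<omega>"
    and "snd a = ymin \<omega>" "snd b = ymax \<omega>" "closed_segment a b \<subseteq> \<omega>"
    and "fst c = xmin \<omega>" "fst d = xmax \<omega>" "closed_segment c d \<subseteq> \<omega>"
  shows "cross_config \<omega> (xmin \<omega>) (xmax \<omega>) (ymin \<omega>) (ymax \<omega>) a b c d"
proof
  show "\<omega> \<subseteq> {xmin \<omega>..xmax \<omega>} \<times> {ymin \<omega>..ymax \<omega>}"
    using region_subset_bbox unfolding bbox_def by auto
  show "ortho_convex \<omega>" using assms(1) by (rule rect_convex_imp_ortho_convex)
qed (use assms nontrivial_row nontrivial_column in auto)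

end

theorem lemma8:
  fixes vs :: "(real \<times> real) list" and sH sV :: "(real \<times> real) set"
  assumes "T_obstacle vs"
    and "is_cross vs sH sV"
  shows "minimum_skeleton (region vs) {sH, sV}"
proof -
  have polygon: "simple_polygon vs" "rectilinear vs" and "rect_convex (region vs)"
    and corners: "card (extreme_corners vs) = 2"
      "\<forall>u\<in>extreme_corners vs. \<forall>v\<in>extreme_corners vs. on_common_side (region vs) u v"
    using assms(1) unfolding T_obstacle_def by auto
  interpret rectilinear_polygon vs using polygon by unfold_locales
  obtain a b c d where cross: "sH = closed_segment a b" "snd a = ymin \<omega>" "snd b = ymax \<omega>"
    "sV = closed_segment c d" "fst c = xmin \<omega>" "fst d = xmax \<omega>"
    using cross_normal_form[OF assms(2)] .
  have "sH \<subseteq> \<omega>" "sV \<subseteq> \<omega>" using assms(2) unfolding is_cross_def by auto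
  then interpret cross_config \<omega> "xmin \<omega>" "xmax \<omega>" "ymin \<omega>" "ymax \<omega>" a b c d
    using cross_config_region \<open>rect_convex \<omega>\<close> cross by simp
  obtain p q where pq: "extreme_corners vs = {p, q}" "p \<noteq> q"
    using corners(1) by (meson card_2_iff)
  then have "fst p = fst q \<or> snd p = snd q"
    using corners(2) unfolding on_common_side_def by auto
  then show ?thesis
    using minimum_skeleton_cross_if_aligned_corners pq extreme_corners_eq cross(1,4) by simp
qed

end
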